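(* Let $(t_i)_{i\ge1}$ be a strictly increasing sequence in $2\mathbb N$, set $t_0:=0$ and $\zeta_N:=\max\{k\ge0:t_k\le N\}$, and suppose $\zeta_N/N\to0$ as $N\to\infty$. Then for every $\lambda\ge0$, $h\ge0$, $$\lim_{N\to\infty,\,N\in2\mathbb N}\frac1N\log\widehat Z^{\{t_i\},\lambda,h}_{N,\omega}(0)=\textsc{f}(\lambda,h)$$ both $\mathbb P$-almost surely and in $L^1(\mathbb P)$, where $$\widehat Z^{\{t_i\},\lambda,h}_{N,\omega}(0):=\mathbf E\Big[e^{-2\lambda\sum_{n=1}^N(\omega_n+h)\Delta_n};\ S_{t_1}=0,\dots,S_{t_{\zeta_N}}=0,\ S_N=0\Big].$$
   Context: Let $S=(S_n)_{n\ge 0}$ be the simple symmetric random walk on $\mathbb Z$ with $S_0=0$ (law $\mathbf P$, expectation $\mathbf E$). Let $\omega=(\omega_n)_{n\ge1}$ be i.i.d. real random variables, independent of $S$, with law $\mathbb P$, such that $\mathbb E[e^{\alpha\omega_1}]<\infty$ for all $\alpha\in\mathbb R$, $\mathbb E[\omega_1]=0$, $\mathbb E[\omega_1^2]=1$. Sign convention: $\mathrm{sign}(S_n)$ is the usual sign when $S_n\neq0$, and if $S_{2n}=0$ one sets $\mathrm{sign}(S_{2n}):=\mathrm{sign}(S_{2n-1})$. Put $\Delta_n:=(1-\mathrm{sign}(S_n))/2$. For $N\in2\mathbb N$: $Z^{\lambda,h}_{N,\omega}(0):=\mathbf E\big[\exp\big(-2\lambda\sum_{n=1}^N(\omega_n+h)\Delta_n\big);\,S_N=0\big]$.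 It is known that $\textsc{f}(\lambda,h):=\lim_{N\in2\mathbb N}\frac1N\log Z^{\lambda,h}_{N,\omega}(0)$ exists a.s. and in $L^1(\mathbb P)$ and is non-random (it is the free energy). *)

theory Defs
  imports "HOL-Probability.Probability"
begin

text \<open>Simple random walk paths of length N, encoded by their list of increments in {-1,1}.
  Each path has probability 2^(-N).\<close>
definition srw_paths :: "nat \<Rightarrow> int list set" where
  "srw_paths N = {xs. length xs = N \<and> set xs \<subseteq> {-1, 1}}"

definition srw_pos :: "int list \<Rightarrow> nat \<Rightarrow> int" where
  "srw_pos xs n = sum_list (take n xs)"

text \<open>Delta_n = (1 - sign(S_n))/2, with sign(S_n) := sign(S_(n-1)) when S_n = 0 (n \<ge> 1).\<close>
definition srw_Delta :: "int list \<Rightarrow> nat \<Rightarrow> real" where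
  "srw_Delta xs n =
     (if srw_pos xs n < 0 then 1
      else if srw_pos xs n = 0 \<and> srw_pos xs (n - 1) < 0 then 1 else 0)"

definition copolymer_weight :: "real \<Rightarrow> real \<Rightarrow> (nat \<Rightarrow> real) \<Rightarrow> nat \<Rightarrow> int list \<Rightarrow> real" where
  "copolymer_weight lam h w N xs = exp (- 2 * lam * (\<Sum>n = 1..N. (w n + h) * srw_Delta xs n))"

definition Z_pinned :: "real \<Rightarrow> real \<Rightarrow> (nat \<Rightarrow> real) \<Rightarrow> nat \<Rightarrow> real" where
  "Z_pinned lam h w N =
     (\<Sum>xs \<in> {xs \<in> srw_paths N. srw_pos xs N = 0}. copolymer_weight lam h w N xs) / 2 ^ N"

definition zeta :: "(nat \<Rightarrow> nat) \<Rightarrow> nat \<Rightarrow> nat" where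
  "zeta t N = Max {k. t k \<le> N}"

definition Z_hat :: "(nat \<Rightarrow> nat) \<Rightarrow> real \<Rightarrow> real \<Rightarrow> (nat \<Rightarrow> real) \<Rightarrow> nat \<Rightarrow> real" where
  "Z_hat t lam h w N =
     (\<Sum>xs \<in> {xs \<in> srw_paths N. (\<forall>k \<in> {1..zeta t N}. srw_pos xs (t k) = 0) \<and> srw_pos xs N = 0}.
        copolymer_weight lam h w N xs) / 2 ^ N"

end

theory Submission
  imports Defs
begin

text \<open>
  Pinning the walk at the extra times \<open>t\<^sub>1, ..., t\<^sub>\<zeta>\<close> only removes paths, so \<open>Z_hat \<le> Z_pinned\<close>.
  Conversely, adding the pinning point \<open>t\<^sub>i\<close> costs at most a factor \<open>1 + 2 (t\<^sub>i - t\<^sub>i\<^sub>-\<^sub>1)\<^sup>2\<close>: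
  a path vanishing at \<open>t\<^sub>i\<^sub>-\<^sub>1\<close> but not at \<open>t\<^sub>i\<close> straddles \<open>t\<^sub>i\<close> with a single excursion;
  cutting that excursion at \<open>t\<^sub>i\<close> into two excursions of the same sign keeps the Boltzmann weight
  (\<open>\<Delta>\<close> is constant along an excursion), and by the Catalan numbers it loses at most a factor
  \<open>2 (t\<^sub>i - a)\<^sup>2\<close> in the number of paths. Hence \<open>log Z_pinned - log Z_hat\<close> is at most
  \<open>\<Sum>\<^sub>i log (1 + 2 (t\<^sub>i - t\<^sub>i\<^sub>-\<^sub>1)\<^sup>2)\<close>, which is \<open>o(N)\<close> because \<open>\<zeta>\<^sub>N = o(N)\<close>, and the almost sure
  convergence is inherited from \<open>Z_pinned\<close>. For the \<open>L\<^sup>1\<close> convergence,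
  \<open>|log Z_hat / N| \<le> log 2 + 2\<lambda>h + 2\<lambda> N\<^sup>-\<^sup>1 \<Sum>|\<omega>\<^sub>n|\<close>, whose square has bounded expectation.
\<close>

section \<open>Simple random walk paths\<close>

lemma srw_paths_finite: "finite (srw_paths L)"
proof -
  have "srw_paths L = {xs. set xs \<subseteq> {-1, 1} \<and> length xs = L}"
    unfolding srw_paths_def by auto
  thus ?thesis using finite_lists_length_eq[of "{-1, 1::int}" L] by simp
qed

lemma card_srw_paths: "card (srw_paths L) = 2 ^ L"
proof -
  have "srw_paths L = {xs. set xs \<subseteq> {-1, 1} \<and> length xs = L}"
    unfolding srw_paths_def by auto
  thus ?thesis using card_lists_length_eq[of "{-1, 1::int}" L] by (simp add: numeral_2_eq_2)
qed

lemma srw_paths_0: "srw_paths 0 = {[]}"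
  unfolding srw_paths_def by auto

lemma srw_paths_Suc: "srw_paths (Suc L) = Cons 1 ` srw_paths L \<union> Cons (-1) ` srw_paths L"
proof
  show "srw_paths (Suc L) \<subseteq> Cons 1 ` srw_paths L \<union> Cons (-1) ` srw_paths L"
  proof
    fix xs assume "xs \<in> srw_paths (Suc L)"
    then obtain s ys where "xs = s # ys" "s \<in> {-1, 1}" "ys \<in> srw_paths L"
      unfolding srw_paths_def by (cases xs) auto
    thus "xs \<in> Cons 1 ` srw_paths L \<union> Cons (-1) ` srw_paths L" by auto
  qed
qed (auto simp: srw_paths_def)

lemma length_srw_paths: "xs \<in> srw_paths L \<Longrightarrow> length xs = L"
  unfolding srw_paths_def by simp

lemma take_in_srw_paths: "xs \<in> srw_paths L \<Longrightarrow> n \<le> L \<Longrightarrow> take n xs \<in> srw_paths n"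
  unfolding srw_paths_def using set_take_subset[of n xs] by auto

lemma drop_in_srw_paths: "xs \<in> srw_paths L \<Longrightarrow> drop n xs \<in> srw_paths (L - n)"
  unfolding srw_paths_def using set_drop_subset[of n xs] by auto

lemma append_in_srw_paths: "p \<in> srw_paths a \<Longrightarrow> q \<in> srw_paths b \<Longrightarrow> p @ q \<in> srw_paths (a + b)"
  unfolding srw_paths_def by auto

lemma uminus_in_srw_paths: "xs \<in> srw_paths L \<Longrightarrow> map uminus xs \<in> srw_paths L"
  unfolding srw_paths_def by auto

lemma srw_pos_0 [simp]: "srw_pos xs 0 = 0"
  by (simp add: srw_pos_def)

lemma srw_pos_Cons_Suc [simp]: "srw_pos (s # xs) (Suc j) = s + srw_pos xs j"
  by (simp add: srw_pos_def)

lemma srw_pos_eq_sum_list: "length xs \<le> n \<Longrightarrow> srw_pos xs n = sum_list xs"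
  by (simp add: srw_pos_def)

lemma srw_pos_append:
  "srw_pos (p @ q) n = (if n \<le> length p then srw_pos p n else sum_list p + srw_pos q (n - length p))"
  by (simp add: srw_pos_def)

lemma srw_pos_append_after:
  "sum_list p = 0 \<Longrightarrow> length p \<le> j \<Longrightarrow> srw_pos (p @ q) j = srw_pos q (j - length p)"
  by (cases "j = length p") (simp_all add: srw_pos_append srw_pos_eq_sum_list)

lemma srw_pos_take: "n \<le> a \<Longrightarrow> srw_pos (take a xs) n = srw_pos xs n"
  by (simp add: srw_pos_def min_def)

lemma srw_pos_drop: "srw_pos (drop a xs) j = srw_pos xs (a + j) - srw_pos xs a"
  by (simp add: srw_pos_def take_add)

lemma srw_pos_uminus: "srw_pos (map uminus xs) j = - srw_pos xs j"
proof -
  have "sum_list (map uminus ys) = - sum_list ys" for ys :: "int list"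
    by (induction ys) auto
  thus ?thesis by (simp add: srw_pos_def take_map)
qed

lemma srw_pos_Suc:
  assumes "xs \<in> srw_paths L" "j < L"
  shows "srw_pos xs (Suc j) - srw_pos xs j \<in> {-1, 1}"
proof -
  have "j < length xs" using assms unfolding srw_paths_def by simp
  hence "srw_pos xs (Suc j) - srw_pos xs j = xs ! j"
    by (simp add: srw_pos_def take_Suc_conv_app_nth)
  also have "xs ! j \<in> {-1, 1}" using assms \<open>j < length xs\<close> nth_mem unfolding srw_paths_def by blast
  finally show ?thesis .
qed

lemma even_length_add_sum_list: "xs \<in> srw_paths L \<Longrightarrow> even (int L + sum_list xs)"
proof (induction xs arbitrary: L)
  case (Cons s xs)
  then obtain L' where "L = Suc L'" "xs \<in> srw_paths L'" "s \<in> {-1, 1}"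
    unfolding srw_paths_def by auto
  with Cons.IH[of L'] show ?case by auto
qed (simp add: srw_paths_def)

lemma even_if_srw_pos_eq_0: "xs \<in> srw_paths L \<Longrightarrow> n \<le> L \<Longrightarrow> srw_pos xs n = 0 \<Longrightarrow> even n"
  using even_length_add_sum_list[OF take_in_srw_paths[of xs L n]] by (simp add: srw_pos_def)

section \<open>Counting walks: reflection principle and Catalan numbers\<close>

definition endpoint_count :: "nat \<Rightarrow> int \<Rightarrow> nat" where
  "endpoint_count L z = card {xs \<in> srw_paths L. sum_list xs = z}"

lemma endpoint_count_0: "endpoint_count 0 z = (if z = 0 then 1 else 0)"
proof -
  have "{xs \<in> srw_paths 0. sum_list xs = z} = (if z = 0 then {[]} else {})"
    by (auto simp: srw_paths_0)
  thus ?thesis unfolding endpoint_count_def by simp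
qed

lemma endpoint_count_Suc: "endpoint_count (Suc L) z = endpoint_count L (z - 1) + endpoint_count L (z + 1)"
proof -
  let ?E = "\<lambda>z. {xs \<in> srw_paths L. sum_list xs = z}"
  have "{xs \<in> srw_paths (Suc L). sum_list xs = z} = Cons 1 ` ?E (z - 1) \<union> Cons (-1) ` ?E (z + 1)"
    by (auto simp: srw_paths_Suc)
  moreover have "card (Cons 1 ` ?E (z - 1) \<union> Cons (-1) ` ?E (z + 1))
      = card (Cons 1 ` ?E (z - 1)) + card (Cons (-1) ` ?E (z + 1))"
    by (rule card_Un_disjoint) (auto intro: finite_subset[OF _ srw_paths_finite])
  ultimately show ?thesis by (simp add: endpoint_count_def card_image)
qed

lemma endpoint_count_eq_0: "int L < \<bar>z\<bar> \<Longrightarrow> endpoint_count L z = 0"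
proof (induction L arbitrary: z)
  case (Suc L)
  thus ?case by (simp add: endpoint_count_Suc)
qed (simp add: endpoint_count_0)

lemma endpoint_count_eq_binomial: "endpoint_count L (2 * int k - int L) = L choose k"
proof (induction L arbitrary: k)
  case 0 thus ?case by (simp add: endpoint_count_0)
next
  case (Suc L)
  show ?case
  proof (cases k)
    case 0
    thus ?thesis using Suc.IH[of 0] by (simp add: endpoint_count_Suc endpoint_count_eq_0)
  next
    case (Suc k')
    have "2 * int k - int (Suc L) - 1 = 2 * int k' - int L" "2 * int k - int (Suc L) + 1 = 2 * int k - int L"
      using Suc by simp_all
    hence "endpoint_count (Suc L) (2 * int k - int (Suc L))
        = endpoint_count L (2 * int k' - int L) + endpoint_count L (2 * int k - int L)"
      by (simp only: endpoint_count_Suc)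
    thus ?thesis using Suc.IH[of k'] Suc.IH[of k] Suc by simp
  qed
qed

definition nonneg_paths :: "nat \<Rightarrow> int \<Rightarrow> int \<Rightarrow> int list set" where
  "nonneg_paths L x y = {d \<in> srw_paths L. (\<forall>j\<le>L. 0 \<le> x + srw_pos d j) \<and> x + sum_list d = y}"

lemma nonneg_paths_finite: "finite (nonneg_paths L x y)"
  unfolding nonneg_paths_def using srw_paths_finite by simp

lemma nonneg_paths_Suc:
  assumes "0 \<le> x"
  shows "nonneg_paths (Suc L) x y = Cons 1 ` nonneg_paths L (x + 1) y \<union> Cons (-1) ` nonneg_paths L (x - 1) y"
proof
  show "nonneg_paths (Suc L) x y \<subseteq> Cons 1 ` nonneg_paths L (x + 1) y \<union> Cons (-1) ` nonneg_paths L (x - 1) y"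
  proof
    fix d assume d: "d \<in> nonneg_paths (Suc L) x y"
    then obtain s d' where dd: "d = s # d'" "s \<in> {-1, 1}" "d' \<in> srw_paths L"
      unfolding nonneg_paths_def srw_paths_Suc by auto
    have "0 \<le> (x + s) + srw_pos d' j" if "j \<le> L" for j
    proof -
      have "0 \<le> x + srw_pos d (Suc j)" using d that unfolding nonneg_paths_def by auto
      thus ?thesis using dd by simp
    qed
    moreover have "(x + s) + sum_list d' = y" using d dd unfolding nonneg_paths_def by simp
    ultimately show "d \<in> Cons 1 ` nonneg_paths L (x + 1) y \<union> Cons (-1) ` nonneg_paths L (x - 1) y"
      using dd unfolding nonneg_paths_def by auto
  qed
next
  have "s # d' \<in> nonneg_paths (Suc L) x y" if "s \<in> {-1, 1}" "d' \<in> nonneg_paths L (x + s) y" for s d'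
  proof -
    have "0 \<le> x + srw_pos (s # d') j" if "j \<le> Suc L" for j
      using that \<open>d' \<in> _\<close> assms unfolding nonneg_paths_def by (cases j) auto
    thus ?thesis using that unfolding nonneg_paths_def srw_paths_def by auto
  qed
  thus "Cons 1 ` nonneg_paths L (x + 1) y \<union> Cons (-1) ` nonneg_paths L (x - 1) y \<subseteq> nonneg_paths (Suc L) x y"
    by auto
qed

lemma card_nonneg_paths:
  "-1 \<le> x \<Longrightarrow> 0 \<le> y \<Longrightarrow>
    int (card (nonneg_paths L x y)) = int (endpoint_count L (y - x)) - int (endpoint_count L (y + x + 2))"
proof (induction L arbitrary: x)
  case 0
  have "nonneg_paths 0 x y = (if 0 \<le> x \<and> x = y then {[]} else {})"
    unfolding nonneg_paths_def srw_paths_0 by auto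
  thus ?case using 0 by (auto simp: endpoint_count_0)
next
  case (Suc L)
  show ?case
  proof (cases "x = -1")
    case True
    hence "nonneg_paths (Suc L) x y = {}" unfolding nonneg_paths_def by force
    thus ?thesis using True by (simp add: add.commute)
  next
    case False
    hence x: "0 \<le> x" using Suc.prems by simp
    have "card (nonneg_paths (Suc L) x y) = card (nonneg_paths L (x + 1) y) + card (nonneg_paths L (x - 1) y)"
      unfolding nonneg_paths_Suc[OF x]
      by (subst card_Un_disjoint) (auto simp: card_image nonneg_paths_finite)
    thus ?thesis using Suc.IH[of "x + 1"] Suc.IH[of "x - 1"] Suc.prems x
      by (simp add: endpoint_count_Suc algebra_simps)
  qed
qed

definition dyck_count :: "nat \<Rightarrow> nat" where
  "dyck_count j = card (nonneg_paths (2 * j) 0 0)"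

lemma Suc_mult_choose_Suc: "Suc j * ((2 * j) choose Suc j) = j * ((2 * j) choose j)"
proof -
  have "Suc j * ((2 * j) choose Suc j) = 2 * j * ((2 * j - 1) choose j)"
    by (rule binomial_absorption)
  also have "\<dots> = (2 * j - j) * ((2 * j) choose j)"
    by (rule binomial_absorb_comp[symmetric])
  finally show ?thesis by simp
qed

lemma central_binomial_Suc: "Suc j * ((2 * Suc j) choose Suc j) = 2 * (2 * j + 1) * ((2 * j) choose j)"
proof -
  have "Suc j * (Suc j * ((2 * Suc j) choose Suc j)) = Suc j * (Suc (2 * j + 1) * ((2 * j + 1) choose j))"
    using Suc_times_binomial[of j "2 * j + 1"] by (simp del: binomial_Suc_Suc)
  also have "(2 * j + 1) choose j = (2 * j + 1) choose Suc j"
    using binomial_symmetric[of j "2 * j + 1"] by simp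
  also have "Suc j * (Suc (2 * j + 1) * ((2 * j + 1) choose Suc j))
      = Suc (2 * j + 1) * (Suc j * (Suc (2 * j) choose Suc j))"
    by (simp del: binomial_Suc_Suc)
  also have "Suc j * (Suc (2 * j) choose Suc j) = Suc (2 * j) * ((2 * j) choose j)"
    by (rule Suc_times_binomial)
  finally have "Suc j * (Suc j * ((2 * Suc j) choose Suc j)) = Suc j * (2 * (2 * j + 1) * ((2 * j) choose j))"
    by (simp add: algebra_simps del: binomial_Suc_Suc)
  thus ?thesis by (simp only: mult_cancel1) simp
qed

lemma Suc_mult_dyck_count: "Suc j * dyck_count j = (2 * j) choose j"
proof -
  have "int (dyck_count j) = int ((2 * j) choose j) - int ((2 * j) choose Suc j)"
    unfolding dyck_count_def using card_nonneg_paths[of 0 0 "2 * j"]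
      endpoint_count_eq_binomial[of "2 * j" j] endpoint_count_eq_binomial[of "2 * j" "Suc j"] by simp
  hence "dyck_count j + ((2 * j) choose Suc j) = (2 * j) choose j" by linarith
  hence "Suc j * dyck_count j + Suc j * ((2 * j) choose Suc j) = Suc j * ((2 * j) choose j)"
    by (metis add_mult_distrib2)
  thus ?thesis unfolding Suc_mult_choose_Suc by simp
qed

lemma dyck_count_Suc_le: "dyck_count (Suc j) \<le> 4 * dyck_count j"
proof -
  have "Suc j * (Suc (Suc j) * dyck_count (Suc j)) = 2 * (2 * j + 1) * (Suc j * dyck_count j)"
    by (simp only: Suc_mult_dyck_count central_binomial_Suc)
  also have "\<dots> \<le> Suc j * (Suc (Suc j) * (4 * dyck_count j))"
    by (simp add: algebra_simps)
  finally show ?thesis by (simp only: mult_le_cancel1)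
qed

lemma dyck_count_add_le: "dyck_count (i + n) \<le> 4 ^ n * dyck_count i"
proof (induction n)
  case (Suc n)
  thus ?case using dyck_count_Suc_le[of "i + n"] by simp
qed simp

lemma four_pow_le_dyck_count: "4 ^ j \<le> (2 * j + 1) * Suc j * dyck_count j"
proof -
  have "(4::nat) ^ j = (\<Sum>k\<le>2 * j. (2 * j) choose k)"
    by (simp add: choose_row_sum power_mult)
  also have "\<dots> \<le> of_nat (card {..2 * j}) * ((2 * j) choose j)"
    by (rule sum_bounded_above) (rule binomial_maximum')
  finally have "4 ^ j \<le> (2 * j + 1) * ((2 * j) choose j)" by simp
  thus ?thesis by (simp only: mult.assoc Suc_mult_dyck_count)
qed

lemma dyck_count_Suc_add_le:
  "dyck_count (Suc (n + m)) \<le> 8 * Suc n ^ 2 * dyck_count n * dyck_count m"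
proof -
  have "dyck_count (Suc (n + m)) \<le> 4 * 4 ^ n * dyck_count m"
    using dyck_count_add_le[of m "Suc n"] by (simp add: add.commute)
  also have "\<dots> \<le> 4 * ((2 * n + 1) * Suc n * dyck_count n) * dyck_count m"
    using four_pow_le_dyck_count[of n] by (intro mult_right_mono mult_left_mono) auto
  also have "\<dots> \<le> 4 * (2 * Suc n ^ 2 * dyck_count n) * dyck_count m"
    by (intro mult_right_mono mult_left_mono) (auto simp: power2_eq_square)
  finally show ?thesis by simp
qed

section \<open>Excursions\<close>

definition excursions :: "nat \<Rightarrow> int list set" where
  "excursions L = {m \<in> srw_paths L. srw_pos m L = 0 \<and> (\<forall>j. 0 < j \<and> j < L \<longrightarrow> srw_pos m j \<noteq> 0)}"

definition pos_excursions :: "nat \<Rightarrow> int list set" where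
  "pos_excursions L = {m \<in> srw_paths L. srw_pos m L = 0 \<and> (\<forall>j. 0 < j \<and> j < L \<longrightarrow> 0 < srw_pos m j)}"

definition neg_excursions :: "nat \<Rightarrow> int list set" where
  "neg_excursions L = {m \<in> srw_paths L. srw_pos m L = 0 \<and> (\<forall>j. 0 < j \<and> j < L \<longrightarrow> srw_pos m j < 0)}"

lemma excursions_finite: "finite (excursions L)"
  and pos_excursions_finite: "finite (pos_excursions L)"
  and neg_excursions_finite: "finite (neg_excursions L)"
  unfolding excursions_def pos_excursions_def neg_excursions_def using srw_paths_finite by simp_all

lemma pos_neg_excursions_disjoint: "0 < L \<Longrightarrow> pos_excursions L \<inter> neg_excursions L = {}"
proof (cases "L = 1")
  case True
  thus ?thesis
    using even_if_srw_pos_eq_0[of _ 1 1] unfolding pos_excursions_def by auto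
qed (force simp: pos_excursions_def neg_excursions_def)

lemma srw_pos_sign_constant:
  assumes xs: "xs \<in> srw_paths L" and nz: "\<forall>j. 0 < j \<and> j < L \<longrightarrow> srw_pos xs j \<noteq> 0"
    and j: "0 < j" "j < L"
  shows "0 < srw_pos xs j \<longleftrightarrow> 0 < srw_pos xs 1"
proof -
  obtain i where i: "j = Suc i" using j by (cases j) auto
  show ?thesis
    using j unfolding i
  proof (induction i)
    case (Suc i)
    have "srw_pos xs (Suc (Suc i)) - srw_pos xs (Suc i) \<in> {-1, 1}"
      using srw_pos_Suc[OF xs, of "Suc i"] Suc.prems by simp
    moreover have "srw_pos xs (Suc (Suc i)) \<noteq> 0" "srw_pos xs (Suc i) \<noteq> 0"
      using nz Suc.prems by auto
    ultimately have "0 < srw_pos xs (Suc (Suc i)) \<longleftrightarrow> 0 < srw_pos xs (Suc i)" by auto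
    thus ?case using Suc by simp
  qed simp
qed

lemma excursions_eq_Un: "excursions L = pos_excursions L \<union> neg_excursions L"
proof
  show "excursions L \<subseteq> pos_excursions L \<union> neg_excursions L"
  proof
    fix m assume "m \<in> excursions L"
    hence m: "m \<in> srw_paths L" "srw_pos m L = 0" "\<forall>j. 0 < j \<and> j < L \<longrightarrow> srw_pos m j \<noteq> 0"
      unfolding excursions_def by auto
    show "m \<in> pos_excursions L \<union> neg_excursions L"
    proof (cases "0 < srw_pos m 1")
      case True
      thus ?thesis using m srw_pos_sign_constant[OF m(1,3)] unfolding pos_excursions_def by auto
    next
      case False
      hence "\<forall>j. 0 < j \<and> j < L \<longrightarrow> srw_pos m j < 0"
        using m(3) srw_pos_sign_constant[OF m(1,3)] by (metis linorder_neqE_linordered_idom)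
      thus ?thesis using m unfolding neg_excursions_def by auto
    qed
  qed
qed (auto simp: excursions_def pos_excursions_def neg_excursions_def)

lemma excursions_lengths: "m \<in> excursions L \<Longrightarrow> length m = L \<and> sum_list m = 0"
  unfolding excursions_def srw_paths_def using srw_pos_eq_sum_list[of m L] by auto

lemma neg_excursions_eq_image: "neg_excursions L = map uminus ` pos_excursions L"
proof
  show "map uminus ` pos_excursions L \<subseteq> neg_excursions L"
    unfolding pos_excursions_def neg_excursions_def
    using uminus_in_srw_paths by (auto simp: srw_pos_uminus)
  show "neg_excursions L \<subseteq> map uminus ` pos_excursions L"
  proof
    fix m assume "m \<in> neg_excursions L"
    hence "map uminus m \<in> pos_excursions L"
      using uminus_in_srw_paths unfolding pos_excursions_def neg_excursions_def by (auto simp: srw_pos_uminus)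
    moreover have "m = map uminus (map uminus m)" by (simp add: comp_def)
    ultimately show "m \<in> map uminus ` pos_excursions L" by blast
  qed
qed

lemma card_neg_excursions: "card (neg_excursions L) = card (pos_excursions L)"
  unfolding neg_excursions_eq_image by (rule card_image) (simp add: inj_on_def)

lemma pos_excursions_Suc_Suc_cases:
  assumes m: "m \<in> pos_excursions (Suc (Suc L))"
  obtains d where "d \<in> nonneg_paths L 0 0" "m = 1 # d @ [-1]"
proof -
  have ml: "length m = Suc (Suc L)" "set m \<subseteq> {-1, 1}" using m unfolding pos_excursions_def srw_paths_def by auto
  then obtain s r where mr: "m = s # r" by (cases m) auto
  with ml obtain d e where re: "r = d @ [e]" by (cases r rule: rev_cases) auto
  have dl: "length d = L" using ml mr re by simp
  have sd: "s \<in> {-1, 1}" "e \<in> {-1, 1}" "set d \<subseteq> {-1, 1}" using ml mr re by auto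
  have ps: "srw_pos m (Suc j) = s + srw_pos d j" if "j \<le> L" for j
    using that dl by (simp add: mr re srw_pos_append)
  have "0 < srw_pos m 1" using m unfolding pos_excursions_def by auto
  hence s1: "s = 1" using ps[of 0] sd by auto
  have "srw_pos m (Suc (Suc L)) = 0" using m unfolding pos_excursions_def by auto
  hence sum0: "s + sum_list d + e = 0" using dl by (simp add: mr re srw_pos_eq_sum_list)
  have "0 < srw_pos m (Suc L)" using m unfolding pos_excursions_def by auto
  hence "0 < s + sum_list d" using ps[of L] dl by (simp add: srw_pos_eq_sum_list)
  hence e1: "e = -1" using sum0 sd by auto
  have "0 \<le> 0 + srw_pos d j" if "j \<le> L" for j
  proof -
    have "0 < srw_pos m (Suc j)" using m that unfolding pos_excursions_def by auto
    thus ?thesis using ps[OF that] s1 by simp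
  qed
  hence "d \<in> nonneg_paths L 0 0" using dl sd sum0 s1 e1 unfolding nonneg_paths_def srw_paths_def by auto
  thus ?thesis using that mr re s1 e1 by simp
qed

lemma pos_excursions_Suc_Suc: "pos_excursions (Suc (Suc L)) = (\<lambda>d. 1 # d @ [-1]) ` nonneg_paths L 0 0"
proof
  show "(\<lambda>d. 1 # d @ [-1]) ` nonneg_paths L 0 0 \<subseteq> pos_excursions (Suc (Suc L))"
  proof
    fix m assume "m \<in> (\<lambda>d. 1 # d @ [-1]) ` nonneg_paths L 0 0"
    then obtain d where m: "m = 1 # d @ [-1]" and d: "d \<in> nonneg_paths L 0 0" by auto
    have dl: "length d = L" "set d \<subseteq> {-1, 1}" using d unfolding nonneg_paths_def srw_paths_def by auto
    have "0 < srw_pos m j" if j: "0 < j" "j < Suc (Suc L)" for j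
    proof -
      obtain j' where j': "j = Suc j'" using j(1) by (cases j) auto
      have "srw_pos m j = 1 + srw_pos d j'" using j j' dl by (simp add: m srw_pos_append)
      moreover have "0 \<le> srw_pos d j'" using d j j' unfolding nonneg_paths_def by auto
      ultimately show ?thesis by simp
    qed
    moreover have "srw_pos m (Suc (Suc L)) = 0"
      using d dl unfolding nonneg_paths_def by (simp add: m srw_pos_eq_sum_list)
    moreover have "m \<in> srw_paths (Suc (Suc L))" using dl unfolding m srw_paths_def by auto
    ultimately show "m \<in> pos_excursions (Suc (Suc L))" unfolding pos_excursions_def by auto
  qed
  show "pos_excursions (Suc (Suc L)) \<subseteq> (\<lambda>d. 1 # d @ [-1]) ` nonneg_paths L 0 0"
    by (auto elim: pos_excursions_Suc_Suc_cases)
qed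

lemma card_pos_excursions: "card (pos_excursions (2 * Suc n)) = dyck_count n"
proof -
  have "card (pos_excursions (Suc (Suc (2 * n)))) = card (nonneg_paths (2 * n) 0 0)"
    unfolding pos_excursions_Suc_Suc by (rule card_image) (simp add: inj_on_def)
  thus ?thesis by (simp add: dyck_count_def)
qed

lemma card_pos_excursions_add_le:
  assumes "even l1" "even l2" "0 < l1" "0 < l2"
  shows "real (card (pos_excursions (l1 + l2)))
    \<le> 2 * real l1 ^ 2 * real (card (pos_excursions l1)) * real (card (pos_excursions l2))"
proof -
  obtain n m where nm: "l1 = 2 * Suc n" "l2 = 2 * Suc m"
    using assms by (metis dvd_def gr0_implies_Suc mult_0_right neq0_conv)
  have "card (pos_excursions (l1 + l2)) = dyck_count (Suc (n + m))"
    using card_pos_excursions[of "Suc (n + m)"] nm by (simp add: algebra_simps)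
  also have "\<dots> \<le> 8 * Suc n ^ 2 * dyck_count n * dyck_count m" by (rule dyck_count_Suc_add_le)
  also have "\<dots> = 2 * (2 * Suc n) ^ 2 * dyck_count n * dyck_count m"
    by (simp only: power_mult_distrib) simp
  also have "\<dots> = 2 * l1 ^ 2 * card (pos_excursions l1) * card (pos_excursions l2)"
    unfolding nm card_pos_excursions ..
  finally have "real (card (pos_excursions (l1 + l2)))
      \<le> real (2 * l1 ^ 2 * card (pos_excursions l1) * card (pos_excursions l2))"
    by (simp only: of_nat_le_iff)
  thus ?thesis by simp
qed

lemma srw_Delta_pos_excursion:
  assumes m: "m \<in> pos_excursions L" and n: "1 \<le> n" "n \<le> L"
  shows "srw_Delta m n = 0"
proof (cases "n = L")
  case True
  have "\<not> srw_pos m (n - 1) < 0"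
  proof (cases "n - 1 = 0")
    case False
    hence "0 < srw_pos m (n - 1)" using m n unfolding pos_excursions_def by auto
    thus ?thesis by simp
  qed simp
  thus ?thesis using m True unfolding srw_Delta_def pos_excursions_def by simp
next
  case False
  hence "0 < srw_pos m n" using m n unfolding pos_excursions_def by auto
  thus ?thesis unfolding srw_Delta_def by simp
qed

lemma srw_Delta_neg_excursion:
  assumes m: "m \<in> neg_excursions L" and n: "1 \<le> n" "n \<le> L"
  shows "srw_Delta m n = 1"
proof (cases "n = L")
  case True
  have "L \<noteq> 1"
    using m even_if_srw_pos_eq_0[of m 1 1] unfolding neg_excursions_def by auto
  hence "srw_pos m (n - 1) < 0" using m n True unfolding neg_excursions_def by auto
  thus ?thesis using m True unfolding srw_Delta_def neg_excursions_def by auto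
next
  case False
  thus ?thesis using m n unfolding srw_Delta_def neg_excursions_def by auto
qed

section \<open>Path weights\<close>

definition energy :: "real \<Rightarrow> (nat \<Rightarrow> real) \<Rightarrow> int list \<Rightarrow> real" where
  "energy h w xs = (\<Sum>n = 1..length xs. (w n + h) * srw_Delta xs n)"

definition weight :: "real \<Rightarrow> real \<Rightarrow> (nat \<Rightarrow> real) \<Rightarrow> int list \<Rightarrow> real" where
  "weight lam h w xs = exp (- 2 * lam * energy h w xs)"

definition shifted :: "nat \<Rightarrow> (nat \<Rightarrow> real) \<Rightarrow> nat \<Rightarrow> real" where
  "shifted a w n = w (a + n)"

lemma shifted_shifted [simp]: "shifted a (shifted b w) = shifted (b + a) w"
  by (rule ext) (simp add: shifted_def add.assoc)

lemma weight_pos: "0 < weight lam h w xs"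
  by (simp add: weight_def)

lemma copolymer_weight_eq_weight: "length xs = N \<Longrightarrow> copolymer_weight lam h w N xs = weight lam h w xs"
  by (simp add: copolymer_weight_def weight_def energy_def)

lemma sum_atLeastAtMost_add_split:
  fixes f :: "nat \<Rightarrow> 'a :: comm_monoid_add"
  shows "(\<Sum>n = 1..l1 + l2. f n) = (\<Sum>n = 1..l1. f n) + (\<Sum>n = 1..l2. f (l1 + n))"
proof -
  have "(\<Sum>n = 1..l1 + l2. f n) = (\<Sum>n = 1..l1. f n) + (\<Sum>n = l1 + 1..l1 + l2. f n)"
    by (rule sum.ub_add_nat) simp
  also have "(\<Sum>n = l1 + 1..l1 + l2. f n) = (\<Sum>n = 1 + l1..l2 + l1. f n)"
    by (simp add: add.commute)
  also have "\<dots> = (\<Sum>n = 1..l2. f (n + l1))"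
    by (rule sum.shift_bounds_cl_nat_ivl)
  finally show ?thesis by (simp add: add.commute)
qed

lemma srw_Delta_append_left: "n \<le> length p \<Longrightarrow> srw_Delta (p @ q) n = srw_Delta p n"
  unfolding srw_Delta_def by (simp add: srw_pos_append)

lemma srw_Delta_append_right:
  assumes "sum_list p = 0" "1 \<le> j"
  shows "srw_Delta (p @ q) (length p + j) = srw_Delta q j"
proof -
  have "srw_pos (p @ q) (length p + j) = srw_pos q j"
    using assms by (simp add: srw_pos_append)
  moreover have "srw_pos (p @ q) (length p + j - 1) = srw_pos q (j - 1)"
    using assms by (cases "j = 1") (simp_all add: srw_pos_append srw_pos_eq_sum_list)
  ultimately show ?thesis unfolding srw_Delta_def by simp
qed

text \<open>Since \<open>\<Delta>\<close> only looks one step back, it is local at a zero of the walk.\<close>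

lemma energy_append:
  assumes "sum_list p = 0"
  shows "energy h w (p @ q) = energy h w p + energy h (shifted (length p) w) q"
proof -
  have "energy h w (p @ q) = (\<Sum>n = 1..length p. (w n + h) * srw_Delta (p @ q) n)
      + (\<Sum>n = 1..length q. (w (length p + n) + h) * srw_Delta (p @ q) (length p + n))"
    unfolding energy_def length_append by (rule sum_atLeastAtMost_add_split)
  also have "\<dots> = energy h w p + energy h (shifted (length p) w) q"
    unfolding energy_def shifted_def
    by (intro arg_cong2[where f = "(+)"] sum.cong) (auto simp: srw_Delta_append_left srw_Delta_append_right[OF assms])
  finally show ?thesis .
qed

lemma weight_append:
  "sum_list p = 0 \<Longrightarrow> weight lam h w (p @ q) = weight lam h w p * weight lam h (shifted (length p) w) q"
  unfolding weight_def by (simp add: energy_append algebra_simps flip: exp_add)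

lemma weight_pos_excursion: "m \<in> pos_excursions L \<Longrightarrow> weight lam h w m = 1"
proof -
  assume m: "m \<in> pos_excursions L"
  hence "length m = L" unfolding pos_excursions_def srw_paths_def by simp
  thus ?thesis unfolding weight_def energy_def using srw_Delta_pos_excursion[OF m] by simp
qed

lemma weight_neg_excursion:
  "m \<in> neg_excursions L \<Longrightarrow> weight lam h w m = exp (- 2 * lam * (\<Sum>n = 1..L. w n + h))"
proof -
  assume m: "m \<in> neg_excursions L"
  hence "length m = L" unfolding neg_excursions_def srw_paths_def by simp
  thus ?thesis unfolding weight_def energy_def using srw_Delta_neg_excursion[OF m] by simp
qed

lemma sum_weight_excursions:
  assumes "0 < L"
  shows "(\<Sum>m\<in>excursions L. weight lam h w m)
    = card (pos_excursions L) * (1 + exp (- 2 * lam * (\<Sum>n = 1..L. w n + h)))"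
proof -
  have "(\<Sum>m\<in>excursions L. weight lam h w m)
      = (\<Sum>m\<in>pos_excursions L. weight lam h w m) + (\<Sum>m\<in>neg_excursions L. weight lam h w m)"
    unfolding excursions_eq_Un using pos_neg_excursions_disjoint[OF assms]
    by (intro sum.union_disjoint pos_excursions_finite neg_excursions_finite)
  thus ?thesis by (simp add: weight_pos_excursion weight_neg_excursion card_neg_excursions algebra_simps)
qed

definition appends :: "'a list set \<Rightarrow> 'a list set \<Rightarrow> 'a list set" where
  "appends P Q = (\<lambda>(p, q). p @ q) ` (P \<times> Q)"

lemma appends_finite: "finite P \<Longrightarrow> finite Q \<Longrightarrow> finite (appends P Q)"
  unfolding appends_def by simp

lemma appends_disjoint:
  assumes "P \<inter> P' = {}" "\<And>p. p \<in> P \<union> P' \<Longrightarrow> length p = a"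
  shows "appends P Q \<inter> appends P' Q' = {}"
proof -
  have "p @ q \<noteq> p' @ q'" if "p \<in> P" "p' \<in> P'" for p q p' q'
  proof
    assume "p @ q = p' @ q'"
    moreover have "length p = length p'" using that assms(2) by simp
    ultimately have "p = p'" by (simp add: append_eq_append_conv)
    thus False using that assms(1) by auto
  qed
  thus ?thesis unfolding appends_def by auto
qed

lemma sum_weight_appends:
  assumes "finite P" "finite Q" and P: "\<And>p. p \<in> P \<Longrightarrow> length p = a \<and> sum_list p = 0"
  shows "(\<Sum>x\<in>appends P Q. weight lam h w x)
    = (\<Sum>p\<in>P. weight lam h w p) * (\<Sum>q\<in>Q. weight lam h (shifted a w) q)"
proof -
  have "inj_on (\<lambda>(p, q). p @ q) (P \<times> Q)"
  proof (rule inj_onI, clarify)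
    fix p q p' q' assume "p \<in> P" "p' \<in> P" "p @ q = p' @ q'"
    thus "p = p' \<and> q = q'" using P[of p] P[of p'] by (simp add: append_eq_append_conv)
  qed
  hence "(\<Sum>x\<in>appends P Q. weight lam h w x) = (\<Sum>(p, q)\<in>P \<times> Q. weight lam h w (p @ q))"
    unfolding appends_def by (simp add: sum.reindex case_prod_beta')
  also have "\<dots> = (\<Sum>(p, q)\<in>P \<times> Q. weight lam h w p * weight lam h (shifted a w) q)"
    by (intro sum.cong) (auto simp: P weight_append)
  also have "\<dots> = (\<Sum>p\<in>P. weight lam h w p) * (\<Sum>q\<in>Q. weight lam h (shifted a w) q)"
    by (simp add: sum_product sum.cartesian_product)
  finally show ?thesis .
qed

definition same_sign_excursion_pairs :: "nat \<Rightarrow> nat \<Rightarrow> int list set" where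
  "same_sign_excursion_pairs l1 l2 =
     appends (pos_excursions l1) (pos_excursions l2) \<union> appends (neg_excursions l1) (neg_excursions l2)"

lemma same_sign_excursion_pairs_finite: "finite (same_sign_excursion_pairs l1 l2)"
  unfolding same_sign_excursion_pairs_def
  by (intro finite_UnI appends_finite pos_excursions_finite neg_excursions_finite)

lemma sum_weight_same_sign_excursion_pairs:
  assumes "0 < l1"
  shows "(\<Sum>m\<in>same_sign_excursion_pairs l1 l2. weight lam h w m)
    = card (pos_excursions l1) * card (pos_excursions l2) * (1 + exp (- 2 * lam * (\<Sum>n = 1..l1 + l2. w n + h)))"
proof -
  have lengths: "length m = l \<and> sum_list m = 0" if "m \<in> pos_excursions l \<union> neg_excursions l" for m l
    using that excursions_lengths unfolding excursions_eq_Un by blast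
  have "(\<Sum>m\<in>same_sign_excursion_pairs l1 l2. weight lam h w m)
      = (\<Sum>m\<in>appends (pos_excursions l1) (pos_excursions l2). weight lam h w m)
      + (\<Sum>m\<in>appends (neg_excursions l1) (neg_excursions l2). weight lam h w m)"
    unfolding same_sign_excursion_pairs_def
  proof (intro sum.union_disjoint appends_finite pos_excursions_finite neg_excursions_finite)
    show "appends (pos_excursions l1) (pos_excursions l2) \<inter> appends (neg_excursions l1) (neg_excursions l2) = {}"
      using pos_neg_excursions_disjoint[OF assms] lengths by (intro appends_disjoint) auto
  qed
  also have "\<dots> = (\<Sum>m\<in>pos_excursions l1. weight lam h w m) * (\<Sum>m\<in>pos_excursions l2. weight lam h (shifted l1 w) m)
      + (\<Sum>m\<in>neg_excursions l1. weight lam h w m) * (\<Sum>m\<in>neg_excursions l2. weight lam h (shifted l1 w) m)"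
    using lengths
    by (intro arg_cong2[where f = "(+)"] sum_weight_appends pos_excursions_finite neg_excursions_finite) auto
  also have "(\<Sum>n = 1..l1 + l2. w n + h) = (\<Sum>n = 1..l1. w n + h) + (\<Sum>n = 1..l2. shifted l1 w n + h)"
    unfolding shifted_def by (rule sum_atLeastAtMost_add_split)
  ultimately show ?thesis
    by (simp add: weight_pos_excursion weight_neg_excursion card_neg_excursions algebra_simps flip: exp_add)
qed

text \<open>Splitting an excursion of length \<open>l1 + l2\<close> into two excursions of the same sign does not
  change its weight, and costs at most a factor \<open>2 l1\<^sup>2\<close> in the number of paths.\<close>

lemma sum_weight_excursions_le:
  assumes "even l1" "even l2" "0 < l1" "0 < l2"
  shows "(\<Sum>m\<in>excursions (l1 + l2). weight lam h w m)
    \<le> 2 * real l1 ^ 2 * (\<Sum>m\<in>same_sign_excursion_pairs l1 l2. weight lam h w m)"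
proof -
  define e where "e = 1 + exp (- 2 * lam * (\<Sum>n = 1..l1 + l2. w n + h))"
  have "(\<Sum>m\<in>excursions (l1 + l2). weight lam h w m) = card (pos_excursions (l1 + l2)) * e"
    unfolding e_def using assms by (simp add: sum_weight_excursions)
  also have "\<dots> \<le> (2 * real l1 ^ 2 * card (pos_excursions l1) * card (pos_excursions l2)) * e"
    using card_pos_excursions_add_le[OF assms] by (intro mult_right_mono) (auto simp: e_def add_nonneg_nonneg)
  also have "\<dots> = 2 * real l1 ^ 2 * (\<Sum>m\<in>same_sign_excursion_pairs l1 l2. weight lam h w m)"
    unfolding e_def using assms by (simp add: sum_weight_same_sign_excursion_pairs)
  finally show ?thesis .
qed

section \<open>Inserting a pinning point\<close>

definition pinned_paths :: "nat set \<Rightarrow> nat \<Rightarrow> int list set" where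
  "pinned_paths C N = {xs \<in> srw_paths N. (\<forall>c\<in>C. srw_pos xs c = 0) \<and> srw_pos xs N = 0}"

lemma pinned_paths_finite: "finite (pinned_paths C N)"
  unfolding pinned_paths_def using srw_paths_finite by simp

lemma pinned_paths_lengths: "p \<in> pinned_paths C a \<Longrightarrow> length p = a \<and> sum_list p = 0"
  unfolding pinned_paths_def srw_paths_def using srw_pos_eq_sum_list[of p a] by auto

lemma same_sign_excursion_pairs_subset: "same_sign_excursion_pairs l1 l2 \<subseteq> appends (excursions l1) (excursions l2)"
  unfolding same_sign_excursion_pairs_def appends_def excursions_eq_Un by auto

lemma appends_excursions_lengths:
  "m \<in> appends (excursions l1) (excursions l2) \<Longrightarrow> length m = l1 + l2 \<and> sum_list m = 0"
  unfolding appends_def by (auto dest!: excursions_lengths)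

lemma appends_excursions_zeros:
  assumes "m \<in> appends (excursions l1) (excursions l2)"
  shows "m \<in> srw_paths (l1 + l2)" "srw_pos m l1 = 0"
    "\<And>j. 0 < j \<Longrightarrow> j < l1 + l2 \<Longrightarrow> j \<noteq> l1 \<Longrightarrow> srw_pos m j \<noteq> 0"
proof -
  obtain m1 m2 where m: "m = m1 @ m2" "m1 \<in> excursions l1" "m2 \<in> excursions l2"
    using assms unfolding appends_def by auto
  note L = excursions_lengths[OF m(2)]
  show "m \<in> srw_paths (l1 + l2)"
    using m append_in_srw_paths unfolding excursions_def by blast
  show "srw_pos m l1 = 0" using L by (simp add: m srw_pos_append srw_pos_eq_sum_list)
  show "srw_pos m j \<noteq> 0" if "0 < j" "j < l1 + l2" "j \<noteq> l1" for j
  proof (cases "j < l1")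
    case True
    thus ?thesis using m(2) L that unfolding excursions_def by (simp add: m srw_pos_append)
  next
    case False
    thus ?thesis using m(3) L that srw_pos_append_after[of m1 j m2]
      unfolding excursions_def by (simp add: m)
  qed
qed

lemma sum_UN_le:
  fixes f :: "'a \<Rightarrow> real"
  assumes "finite I" "\<And>i. i \<in> I \<Longrightarrow> finite (A i)" "\<And>x. 0 \<le> f x"
  shows "sum f (\<Union>i\<in>I. A i) \<le> (\<Sum>i\<in>I. sum f (A i))"
proof -
  have "(\<Union>i\<in>I. A i) = snd ` Sigma I A" by force
  moreover have "sum f (snd ` Sigma I A) \<le> sum (f \<circ> snd) (Sigma I A)"
    by (rule sum_image_le) (use assms in auto)
  ultimately have "sum f (\<Union>i\<in>I. A i) \<le> sum (f \<circ> snd) (Sigma I A)" by simp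
  also have "\<dots> = (\<Sum>i\<in>I. sum f (A i))"
    using assms by (simp add: sum.Sigma split_def)
  finally show ?thesis .
qed

text \<open>The segments in \<open>M\<close> are meant to have length \<open>b - a\<close>; the index \<open>b\<close> itself only enters
  through the length \<open>N - b\<close> of the final bridge.\<close>

definition spliced_paths :: "nat set \<Rightarrow> nat \<Rightarrow> int list set \<Rightarrow> nat \<Rightarrow> nat \<Rightarrow> int list set" where
  "spliced_paths C a M b N = appends (pinned_paths C a) (appends M (pinned_paths {} (N - b)))"

lemma spliced_paths_finite: "finite M \<Longrightarrow> finite (spliced_paths C a M b N)"
  unfolding spliced_paths_def by (intro appends_finite pinned_paths_finite)

lemma sum_weight_spliced_paths_mono:
  assumes "finite M" "finite M'" "0 \<le> R"
    and M: "\<And>m. m \<in> M \<union> M' \<Longrightarrow> length m = l \<and> sum_list m = 0"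
    and le: "(\<Sum>m\<in>M. weight lam h (shifted a w) m) \<le> R * (\<Sum>m\<in>M'. weight lam h (shifted a w) m)"
  shows "(\<Sum>x\<in>spliced_paths C a M b N. weight lam h w x) \<le> R * (\<Sum>x\<in>spliced_paths C a M' b N. weight lam h w x)"
proof -
  define P where "P = pinned_paths C a"
  define Q where "Q = pinned_paths {} (N - b)"
  define S where "S X = (\<Sum>m\<in>X. weight lam h (shifted a w) m)" for X
  have sum_eq: "(\<Sum>x\<in>spliced_paths C a X b N. weight lam h w x)
      = (\<Sum>p\<in>P. weight lam h w p) * (S X * (\<Sum>q\<in>Q. weight lam h (shifted (a + l) w) q))"
    if "X = M \<or> X = M'" for X
    using that assms(1,2) M pinned_paths_lengths unfolding S_def P_def Q_def spliced_paths_def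
    by (auto simp: sum_weight_appends appends_finite pinned_paths_finite add.commute)
  have "S M * (\<Sum>q\<in>Q. weight lam h (shifted (a + l) w) q) \<le> R * S M' * (\<Sum>q\<in>Q. weight lam h (shifted (a + l) w) q)"
    using le unfolding S_def by (intro mult_right_mono sum_nonneg) (auto simp: less_imp_le weight_pos)
  hence "(\<Sum>p\<in>P. weight lam h w p) * (S M * (\<Sum>q\<in>Q. weight lam h (shifted (a + l) w) q))
      \<le> (\<Sum>p\<in>P. weight lam h w p) * (R * S M' * (\<Sum>q\<in>Q. weight lam h (shifted (a + l) w) q))"
    by (intro mult_left_mono sum_nonneg) (auto simp: less_imp_le weight_pos)
  thus ?thesis by (simp add: sum_eq algebra_simps)
qed

lemma spliced_paths_if_consecutive_zeros:
  assumes x: "x \<in> pinned_paths C N" and ab: "a < b" "b \<le> N" "\<forall>c\<in>C. c \<le> a"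
    and zeros: "srw_pos x a = 0" "srw_pos x b = 0" and nonzero: "\<And>j. a < j \<Longrightarrow> j < b \<Longrightarrow> srw_pos x j \<noteq> 0"
  shows "x \<in> spliced_paths C a (excursions (b - a)) b N"
proof -
  have xp: "x \<in> srw_paths N" "srw_pos x N = 0" "\<forall>c\<in>C. srw_pos x c = 0"
    using x unfolding pinned_paths_def by auto
  define p where "p = take a x"
  define m where "m = take (b - a) (drop a x)"
  define q where "q = drop b x"
  have "x = p @ m @ q"
  proof -
    have "drop a x = m @ drop (b - a) (drop a x)" unfolding m_def by (rule append_take_drop_id[symmetric])
    moreover have "drop (b - a) (drop a x) = q" unfolding q_def using ab by simp
    ultimately show ?thesis unfolding p_def by (metis append_take_drop_id)
  qed
  moreover have "p \<in> pinned_paths C a"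
  proof -
    have "p \<in> srw_paths a" unfolding p_def using xp(1) ab by (intro take_in_srw_paths) auto
    moreover have "srw_pos p c = 0" if "c \<in> C \<union> {a}" for c
      using that xp(3) ab zeros unfolding p_def by (auto simp: srw_pos_take)
    ultimately show ?thesis unfolding pinned_paths_def by simp
  qed
  moreover have "m \<in> excursions (b - a)"
  proof -
    have pos_m: "srw_pos m j = srw_pos x (a + j)" if "j \<le> b - a" for j
      unfolding m_def using that zeros by (simp add: srw_pos_take srw_pos_drop)
    have "m \<in> srw_paths (b - a)"
      unfolding m_def using drop_in_srw_paths[OF xp(1)] ab by (intro take_in_srw_paths) auto
    moreover have "srw_pos m j \<noteq> 0" if "0 < j" "j < b - a" for j
      using pos_m[of j] nonzero[of "a + j"] that by simp
    ultimately show ?thesis using pos_m[of "b - a"] zeros ab unfolding excursions_def by auto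
  qed
  moreover have "q \<in> pinned_paths {} (N - b)"
    using drop_in_srw_paths[OF xp(1)] zeros xp(2) ab unfolding q_def pinned_paths_def by (simp add: srw_pos_drop)
  ultimately show ?thesis unfolding spliced_paths_def appends_def by blast
qed

lemma pinned_paths_decomposition:
  assumes x: "x \<in> pinned_paths C N" "srw_pos x t \<noteq> 0"
    and ut: "u < t" "t \<le> N" "srw_pos x u = 0" and C: "\<forall>c\<in>C. c \<le> u"
  obtains a b where "u \<le> a" "a < t" "t < b" "b \<le> N" "even a" "even b"
    "x \<in> spliced_paths C a (excursions (b - a)) b N"
proof -
  have xp: "x \<in> srw_paths N" "srw_pos x N = 0"
    using x unfolding pinned_paths_def by auto
  define Z where "Z = {j. j \<le> t \<and> srw_pos x j = 0}"
  define Z' where "Z' = {j. t \<le> j \<and> j \<le> N \<and> srw_pos x j = 0}"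
  have Zf: "finite Z" "finite Z'" unfolding Z_def Z'_def by auto
  define a where "a = Max Z"
  define b where "b = Min Z'"
  have aZ: "a \<in> Z" unfolding a_def using Zf ut by (intro Max_in) (auto simp: Z_def)
  have bZ: "b \<in> Z'" unfolding b_def using Zf ut xp by (intro Min_in) (auto simp: Z'_def)
  have ua: "u \<le> a" unfolding a_def using Zf ut by (intro Max_ge) (auto simp: Z_def)
  have bN: "b \<le> N" using bZ unfolding Z'_def by simp
  have at: "a < t" using aZ x(2) unfolding Z_def by (cases "a = t") auto
  have tb: "t < b" using bZ x(2) unfolding Z'_def by (cases "b = t") auto
  have pa: "srw_pos x a = 0" using aZ unfolding Z_def by simp
  have pb: "srw_pos x b = 0" using bZ unfolding Z'_def by simp
  have "srw_pos x j \<noteq> 0" if j: "a < j" "j < b" for j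
  proof
    assume z: "srw_pos x j = 0"
    show False
    proof (cases "j \<le> t")
      case True
      hence "j \<in> Z" using z unfolding Z_def by simp
      hence "j \<le> a" using Max_ge[OF Zf(1)] unfolding a_def by blast
      thus False using j by simp
    next
      case False
      hence "j \<in> Z'" using z j bN unfolding Z'_def by simp
      hence "b \<le> j" using Min_le[OF Zf(2)] unfolding b_def by blast
      thus False using j by simp
    qed
  qed
  hence "x \<in> spliced_paths C a (excursions (b - a)) b N"
    using C ua at tb bN pa pb by (intro spliced_paths_if_consecutive_zeros[OF x(1)]) auto
  moreover have "even a" using even_if_srw_pos_eq_0[OF xp(1) _ pa] at ut by simp
  moreover have "even b" using even_if_srw_pos_eq_0[OF xp(1) bN pb] .
  ultimately show ?thesis using that ua at tb bN by blast
qed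

lemma spliced_same_sign_pairs_zeros:
  assumes y: "y \<in> spliced_paths C a (same_sign_excursion_pairs (t - a) (b - t)) b N"
    and ab: "a < t" "t < b" "b \<le> N" and C: "\<forall>c\<in>C. c \<le> a"
  shows "y \<in> pinned_paths (insert t C) N" "srw_pos y a = 0" "srw_pos y b = 0"
    "\<And>j. a < j \<Longrightarrow> j < b \<Longrightarrow> j \<noteq> t \<Longrightarrow> srw_pos y j \<noteq> 0"
proof -
  obtain p r where y_eq: "y = p @ r" and p: "p \<in> pinned_paths C a"
    and r: "r \<in> appends (same_sign_excursion_pairs (t - a) (b - t)) (pinned_paths {} (N - b))"
    using y unfolding spliced_paths_def appends_def by auto
  obtain m q where r_eq: "r = m @ q" and q: "q \<in> pinned_paths {} (N - b)"
    and "m \<in> same_sign_excursion_pairs (t - a) (b - t)"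
    using r unfolding appends_def by auto
  hence m: "m \<in> appends (excursions (t - a)) (excursions (b - t))"
    using same_sign_excursion_pairs_subset by blast
  note Lp = pinned_paths_lengths[OF p] and Lm = appends_excursions_lengths[OF m]
    and Lq = pinned_paths_lengths[OF q]
  note zm = appends_excursions_zeros[OF m]
  have lens: "t - a + (b - t) = b - a" "a + (b - a) = b" using ab by auto
  note y_eq = y_eq[unfolded r_eq]
  have pos_y: "srw_pos y j = srw_pos m (j - a)" if "a \<le> j" "j \<le> b" for j
  proof -
    have "srw_pos y j = srw_pos (m @ q) (j - a)"
      using that Lp unfolding y_eq by (simp add: srw_pos_append_after)
    also have "\<dots> = srw_pos m (j - a)"
      using that Lm lens by (simp add: srw_pos_append)
    finally show ?thesis .
  qed
  have pos_y_p: "srw_pos y j = srw_pos p j" if "j \<le> a" for j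
    using that Lp by (simp add: y_eq srw_pos_append)
  show "srw_pos y a = 0" using pos_y[of a] ab by simp
  show "srw_pos y b = 0" using pos_y[of b] ab Lm lens by (simp add: srw_pos_eq_sum_list)
  show "srw_pos y j \<noteq> 0" if "a < j" "j < b" "j \<noteq> t" for j
    using pos_y[of j] zm(3)[of "j - a"] that ab by simp
  have "p \<in> srw_paths a" "m \<in> srw_paths (b - a)" "q \<in> srw_paths (N - b)"
    using p q zm(1) lens unfolding pinned_paths_def by auto
  hence "y \<in> srw_paths (a + ((b - a) + (N - b)))"
    unfolding y_eq by (intro append_in_srw_paths)
  moreover have "a + ((b - a) + (N - b)) = N" using ab by simp
  ultimately have "y \<in> srw_paths N" by simp
  moreover have "srw_pos y N = 0"
    using length_srw_paths[OF \<open>y \<in> srw_paths N\<close>] Lp Lm Lq by (simp add: srw_pos_eq_sum_list y_eq)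
  moreover have "srw_pos y t = 0" using pos_y[of t] zm(2) ab by simp
  moreover have "srw_pos y c = 0" if "c \<in> C" for c
    using pos_y_p[of c] that C p unfolding pinned_paths_def by auto
  ultimately show "y \<in> pinned_paths (insert t C) N" unfolding pinned_paths_def by auto
qed

lemma spliced_same_sign_pairs_disjoint:
  assumes "a < t" "t < b" "b \<le> N" "a' < t" "t < b'" "b' \<le> N" "\<forall>c\<in>C. c \<le> a" "\<forall>c\<in>C. c \<le> a'"
    and "(a, b) \<noteq> (a', b')"
  shows "spliced_paths C a (same_sign_excursion_pairs (t - a) (b - t)) b N
    \<inter> spliced_paths C a' (same_sign_excursion_pairs (t - a') (b' - t)) b' N = {}"
proof (rule ccontr)
  assume "\<not> ?thesis"
  then obtain y where y: "y \<in> spliced_paths C a (same_sign_excursion_pairs (t - a) (b - t)) b N"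
    "y \<in> spliced_paths C a' (same_sign_excursion_pairs (t - a') (b' - t)) b' N" by blast
  note Z = spliced_same_sign_pairs_zeros[OF y(1) assms(1-3,7)]
  note Z' = spliced_same_sign_pairs_zeros[OF y(2) assms(4-6,8)]
  have "a = a'"
  proof (rule ccontr)
    assume "a \<noteq> a'"
    hence "a < a' \<or> a' < a" by arith
    thus False using Z(2,4) Z'(2,4) assms(1-6) by auto
  qed
  moreover have "b = b'"
  proof (rule ccontr)
    assume "b \<noteq> b'"
    hence "b < b' \<or> b' < b" by arith
    thus False using Z(3,4) Z'(3,4) assms(1-6) by auto
  qed
  ultimately show False using assms(9) by simp
qed

lemma sum_weight_spliced_excursions_le:
  assumes "a < t" "t < b" "even (t - a)" "even (b - t)"
  shows "(\<Sum>x\<in>spliced_paths C a (excursions (b - a)) b N. weight lam h w x)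
    \<le> 2 * real (t - a) ^ 2 * (\<Sum>x\<in>spliced_paths C a (same_sign_excursion_pairs (t - a) (b - t)) b N. weight lam h w x)"
proof -
  have lengths: "length m = b - a \<and> sum_list m = 0"
    if "m \<in> excursions (b - a) \<union> same_sign_excursion_pairs (t - a) (b - t)" for m
    using that same_sign_excursion_pairs_subset[of "t - a" "b - t"] assms
      excursions_lengths[of m] appends_excursions_lengths[of m "t - a" "b - t"] by auto
  have "(\<Sum>m\<in>excursions (b - a). weight lam h (shifted a w) m)
      \<le> 2 * real (t - a) ^ 2 * (\<Sum>m\<in>same_sign_excursion_pairs (t - a) (b - t). weight lam h (shifted a w) m)"
    using sum_weight_excursions_le[of "t - a" "b - t" lam h "shifted a w"] assms by simp
  thus ?thesis
    using lengths by (intro sum_weight_spliced_paths_mono excursions_finite same_sign_excursion_pairs_finite) auto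
qed

lemma sum_sum_weight_spliced_same_sign_le:
  assumes "finite I" and I: "\<And>a b. (a, b) \<in> I \<Longrightarrow> a < t \<and> t < b \<and> b \<le> N \<and> (\<forall>c\<in>C. c \<le> a)"
  shows "(\<Sum>(a, b)\<in>I. \<Sum>x\<in>spliced_paths C a (same_sign_excursion_pairs (t - a) (b - t)) b N. weight lam h w x)
    \<le> (\<Sum>x\<in>pinned_paths (insert t C) N. weight lam h w x)"
proof -
  define H where "H = (\<lambda>(a, b). spliced_paths C a (same_sign_excursion_pairs (t - a) (b - t)) b N)"
  have "(\<Sum>(a, b)\<in>I. \<Sum>x\<in>spliced_paths C a (same_sign_excursion_pairs (t - a) (b - t)) b N. weight lam h w x)
      = (\<Sum>i\<in>I. sum (weight lam h w) (H i))"
    unfolding H_def by (simp add: case_prod_unfold)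
  also have "\<dots> = sum (weight lam h w) (\<Union>i\<in>I. H i)"
  proof (intro sum.UNION_disjoint[symmetric] assms(1) ballI impI)
    show "finite (H i)" for i
      unfolding H_def by (auto intro: spliced_paths_finite same_sign_excursion_pairs_finite split: prod.splits)
    fix i j assume "i \<in> I" "j \<in> I" "i \<noteq> j"
    obtain a b a' b' where ij: "i = (a, b)" "j = (a', b')" by fastforce
    show "H i \<inter> H j = {}"
      unfolding H_def ij prod.case using I \<open>i \<in> I\<close> \<open>j \<in> I\<close> \<open>i \<noteq> j\<close> unfolding ij
      by (intro spliced_same_sign_pairs_disjoint) auto
  qed
  also have "\<dots> \<le> (\<Sum>x\<in>pinned_paths (insert t C) N. weight lam h w x)"
  proof (intro sum_mono2 pinned_paths_finite)
    show "(\<Union>i\<in>I. H i) \<subseteq> pinned_paths (insert t C) N"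
      unfolding H_def using I spliced_same_sign_pairs_zeros(1) by fast
  qed (simp add: less_imp_le weight_pos)
  finally show ?thesis .
qed

lemma sum_weight_pinned_paths_diff_le:
  assumes ut: "u < t" "t \<le> N" and C: "\<forall>c\<in>C. c \<le> u"
    and zero_u: "\<forall>x\<in>pinned_paths C N. srw_pos x u = 0"
  shows "(\<Sum>x\<in>pinned_paths C N - pinned_paths (insert t C) N. weight lam h w x)
    \<le> (\<Sum>(a, b)\<in>{(a, b). u \<le> a \<and> a < t \<and> t < b \<and> b \<le> N \<and> even a \<and> even b}.
          \<Sum>x\<in>spliced_paths C a (excursions (b - a)) b N. weight lam h w x)"
    (is "_ \<le> (\<Sum>(a, b)\<in>?I. _)")
proof -
  define I where "I = ?I"
  define G where "G = (\<lambda>(a, b). spliced_paths C a (excursions (b - a)) b N)"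
  have I_finite: "finite I"
    by (rule finite_subset[of _ "{0..N} \<times> {0..N}"]) (auto simp: I_def)
  have G_finite: "finite (G i)" for i
    unfolding G_def by (auto intro: spliced_paths_finite excursions_finite split: prod.splits)
  have "pinned_paths C N - pinned_paths (insert t C) N \<subseteq> (\<Union>i\<in>I. G i)"
  proof
    fix x assume "x \<in> pinned_paths C N - pinned_paths (insert t C) N"
    hence x: "x \<in> pinned_paths C N" "srw_pos x t \<noteq> 0" unfolding pinned_paths_def by auto
    obtain a b where "u \<le> a" "a < t" "t < b" "b \<le> N" "even a" "even b"
      "x \<in> spliced_paths C a (excursions (b - a)) b N"
      using pinned_paths_decomposition[OF x ut _ C] zero_u x(1) by blast
    thus "x \<in> (\<Union>i\<in>I. G i)" unfolding I_def G_def by blast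
  qed
  hence "(\<Sum>x\<in>pinned_paths C N - pinned_paths (insert t C) N. weight lam h w x)
      \<le> sum (weight lam h w) (\<Union>i\<in>I. G i)"
    using I_finite G_finite by (intro sum_mono2 finite_UN_I) (auto simp: less_imp_le weight_pos)
  also have "\<dots> \<le> (\<Sum>i\<in>I. sum (weight lam h w) (G i))"
    using I_finite G_finite by (intro sum_UN_le) (auto simp: less_imp_le weight_pos)
  finally show ?thesis unfolding G_def I_def by (simp add: case_prod_unfold)
qed

text \<open>The paths not vanishing at \<open>t\<close> are sorted by the excursion straddling \<open>t\<close>; each class is
  compared with a class of paths vanishing at \<open>t\<close> by splitting that excursion, and the latter
  classes are disjoint.\<close>

lemma sum_weight_pinned_paths_insert_le:
  assumes ut: "u < t" "t \<le> N" "even t" and C: "\<forall>c\<in>C. c \<le> u"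
    and zero_u: "\<forall>x\<in>pinned_paths C N. srw_pos x u = 0"
  shows "(\<Sum>x\<in>pinned_paths C N. weight lam h w x)
    \<le> (1 + 2 * real (t - u) ^ 2) * (\<Sum>x\<in>pinned_paths (insert t C) N. weight lam h w x)"
proof -
  define R where "R = 2 * real (t - u) ^ 2"
  define f where "f = weight lam h w"
  define I where "I = {(a, b). u \<le> a \<and> a < t \<and> t < b \<and> b \<le> N \<and> even a \<and> even b}"
  have "sum f (pinned_paths C N - pinned_paths (insert t C) N)
      \<le> (\<Sum>(a, b)\<in>I. sum f (spliced_paths C a (excursions (b - a)) b N))"
    unfolding f_def I_def by (rule sum_weight_pinned_paths_diff_le[OF ut(1,2) C zero_u])
  also have "\<dots> \<le> (\<Sum>(a, b)\<in>I. R * sum f (spliced_paths C a (same_sign_excursion_pairs (t - a) (b - t)) b N))"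
  proof (rule sum_mono, clarify)
    fix a b assume "(a, b) \<in> I"
    hence ab: "u \<le> a" "a < t" "t < b" "even a" "even b" unfolding I_def by auto
    have "sum f (spliced_paths C a (excursions (b - a)) b N)
        \<le> 2 * real (t - a) ^ 2 * sum f (spliced_paths C a (same_sign_excursion_pairs (t - a) (b - t)) b N)"
      unfolding f_def using ab ut(3) by (intro sum_weight_spliced_excursions_le) auto
    also have "\<dots> \<le> R * sum f (spliced_paths C a (same_sign_excursion_pairs (t - a) (b - t)) b N)"
      unfolding R_def f_def using ab
      by (intro mult_right_mono sum_nonneg) (auto simp: power_mono less_imp_le weight_pos)
    finally show "sum f (spliced_paths C a (excursions (b - a)) b N)
        \<le> R * sum f (spliced_paths C a (same_sign_excursion_pairs (t - a) (b - t)) b N)" .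
  qed
  also have "\<dots> = R * (\<Sum>(a, b)\<in>I. sum f (spliced_paths C a (same_sign_excursion_pairs (t - a) (b - t)) b N))"
    by (simp add: sum_distrib_left case_prod_unfold)
  also have "\<dots> \<le> R * sum f (pinned_paths (insert t C) N)"
  proof (unfold f_def R_def, intro mult_left_mono sum_sum_weight_spliced_same_sign_le)
    show "finite I" by (rule finite_subset[of _ "{0..N} \<times> {0..N}"]) (auto simp: I_def)
  qed (use C in \<open>auto simp: I_def\<close>)
  finally have "sum f (pinned_paths C N - pinned_paths (insert t C) N) \<le> R * sum f (pinned_paths (insert t C) N)" .
  moreover have "sum f (pinned_paths C N)
      = sum f (pinned_paths C N - pinned_paths (insert t C) N) + sum f (pinned_paths (insert t C) N)"
    by (rule sum.subset_diff[OF _ pinned_paths_finite]) (auto simp: pinned_paths_def)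
  ultimately show ?thesis unfolding f_def R_def by (simp add: algebra_simps)
qed

section \<open>Comparison of the two partition functions\<close>

lemma zeta_le:
  assumes "strict_mono t" "t 0 = 0" "k \<le> zeta t N"
  shows "t k \<le> N"
proof -
  have "{k. t k \<le> N} \<subseteq> {..N}"
    using strict_mono_imp_increasing[OF assms(1)] by (auto intro: order_trans)
  hence "finite {k. t k \<le> N}" by (rule finite_subset) simp
  moreover have "0 \<in> {k. t k \<le> N}" using assms by simp
  ultimately have "t (zeta t N) \<le> N" unfolding zeta_def using Max_in by blast
  thus ?thesis using assms strict_mono_mono[OF assms(1)] by (meson monoD order_trans)
qed

definition insertion_cost :: "(nat \<Rightarrow> nat) \<Rightarrow> nat \<Rightarrow> real" where
  "insertion_cost t N = (\<Prod>i = 1..zeta t N. 1 + 2 * real (t i - t (i - 1)) ^ 2)"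

lemma sum_weight_pinned_paths_le_cost:
  assumes t: "strict_mono t" "t 0 = 0" "\<And>i. even (t i)" and k: "k \<le> zeta t N"
  shows "(\<Sum>x\<in>pinned_paths {} N. weight lam h w x)
    \<le> (\<Prod>i = 1..k. 1 + 2 * real (t i - t (i - 1)) ^ 2) * (\<Sum>x\<in>pinned_paths (t ` {1..k}) N. weight lam h w x)"
  using k
proof (induction k)
  case (Suc k)
  let ?c = "\<lambda>i. 1 + 2 * real (t i - t (i - 1)) ^ 2"
  let ?W = "\<lambda>C. \<Sum>x\<in>pinned_paths C N. weight lam h w x"
  have "?W (t ` {1..k}) \<le> ?c (Suc k) * ?W (insert (t (Suc k)) (t ` {1..k}))"
  proof (simp only: diff_Suc_1, rule sum_weight_pinned_paths_insert_le)
    show "t k < t (Suc k)" using t(1) by (simp add: strict_mono_def)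
    show "t (Suc k) \<le> N" using zeta_le[OF t(1,2) Suc.prems] .
    show "\<forall>c\<in>t ` {1..k}. c \<le> t k" using strict_mono_mono[OF t(1)] by (auto simp: monoD)
    show "\<forall>x\<in>pinned_paths (t ` {1..k}) N. srw_pos x (t k) = 0"
      using t(2) unfolding pinned_paths_def by (cases k) auto
  qed (use t(3) in simp)
  also have "insert (t (Suc k)) (t ` {1..k}) = t ` {1..Suc k}"
    by (auto simp: atLeastAtMostSuc_conv)
  finally have step: "?W (t ` {1..k}) \<le> ?c (Suc k) * ?W (t ` {1..Suc k})" .
  have "?W {} \<le> prod ?c {1..k} * ?W (t ` {1..k})" using Suc by simp
  also have "\<dots> \<le> prod ?c {1..k} * (?c (Suc k) * ?W (t ` {1..Suc k}))"
    by (intro mult_left_mono step prod_nonneg) simp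
  also have "\<dots> = prod ?c {1..Suc k} * ?W (t ` {1..Suc k})"
    by (simp add: mult.assoc)
  finally show ?case .
qed simp

definition zigzag :: "nat \<Rightarrow> int list" where
  "zigzag N = map (\<lambda>i. if even i then 1 else -1) [0..<N]"

lemma srw_pos_zigzag: "n \<le> N \<Longrightarrow> srw_pos (zigzag N) n = (if even n then 0 else 1)"
proof -
  have "sum_list (map (\<lambda>i. if even i then (1::int) else -1) [0..<n]) = (if even n then 0 else 1)" for n
    by (induction n) auto
  thus "n \<le> N \<Longrightarrow> ?thesis" unfolding srw_pos_def zigzag_def by (simp add: take_map min_def)
qed

lemma zigzag_in_pinned_paths: "even N \<Longrightarrow> \<forall>c\<in>C. even c \<and> c \<le> N \<Longrightarrow> zigzag N \<in> pinned_paths C N"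
  unfolding pinned_paths_def srw_paths_def by (auto simp: srw_pos_zigzag) (auto simp: zigzag_def)

lemma weight_zigzag: "weight lam h w (zigzag N) = 1"
proof -
  have "srw_Delta (zigzag N) n = 0" if "n \<le> N" for n
    using srw_pos_zigzag[of n N] srw_pos_zigzag[of "n - 1" N] that unfolding srw_Delta_def by auto
  thus ?thesis unfolding weight_def energy_def by (simp add: zigzag_def)
qed

lemma weight_le_exp_sum_abs:
  assumes "0 \<le> lam"
  shows "weight lam h w x \<le> exp (2 * lam * (\<Sum>n = 1..length x. \<bar>w n + h\<bar>))"
proof -
  have "- \<bar>w n + h\<bar> \<le> (w n + h) * srw_Delta x n" for n
  proof -
    have "\<bar>(w n + h) * srw_Delta x n\<bar> \<le> \<bar>w n + h\<bar>"
      unfolding srw_Delta_def by (simp add: abs_mult)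
    thus ?thesis by linarith
  qed
  hence "- (\<Sum>n = 1..length x. \<bar>w n + h\<bar>) \<le> energy h w x"
    unfolding energy_def by (simp add: sum_mono flip: sum_negf)
  hence "lam * - (\<Sum>n = 1..length x. \<bar>w n + h\<bar>) \<le> lam * energy h w x"
    using assms by (rule mult_left_mono)
  thus ?thesis unfolding weight_def by simp
qed

lemma Z_pinned_eq: "Z_pinned lam h w N = (\<Sum>x\<in>pinned_paths {} N. weight lam h w x) / 2 ^ N"
proof -
  have "{xs \<in> srw_paths N. srw_pos xs N = 0} = pinned_paths {} N" unfolding pinned_paths_def by auto
  thus ?thesis unfolding Z_pinned_def
    by (intro arg_cong2[where f = "(/)"] sum.cong) (auto simp: copolymer_weight_eq_weight pinned_paths_def length_srw_paths)
qed

lemma Z_hat_eq: "Z_hat t lam h w N = (\<Sum>x\<in>pinned_paths (t ` {1..zeta t N}) N. weight lam h w x) / 2 ^ N"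
proof -
  have "{xs \<in> srw_paths N. (\<forall>k\<in>{1..zeta t N}. srw_pos xs (t k) = 0) \<and> srw_pos xs N = 0}
      = pinned_paths (t ` {1..zeta t N}) N" unfolding pinned_paths_def by auto
  thus ?thesis unfolding Z_hat_def
    by (intro arg_cong2[where f = "(/)"] sum.cong) (auto simp: copolymer_weight_eq_weight pinned_paths_def length_srw_paths)
qed

lemma Z_hat_bounds:
  assumes t: "strict_mono t" "t 0 = 0" "\<And>i. even (t i)" and N: "even N" and lam: "0 \<le> lam"
  shows "1 / 2 ^ N \<le> Z_hat t lam h w N"
    and "Z_hat t lam h w N \<le> Z_pinned lam h w N"
    and "Z_pinned lam h w N \<le> insertion_cost t N * Z_hat t lam h w N"
    and "Z_hat t lam h w N \<le> exp (2 * lam * (\<Sum>n = 1..N. \<bar>w n + h\<bar>))"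
proof -
  define C where "C = t ` {1..zeta t N}"
  define WC where "WC = (\<Sum>x\<in>pinned_paths C N. weight lam h w x)"
  define W0 where "W0 = (\<Sum>x\<in>pinned_paths {} N. weight lam h w x)"
  have Z_hat: "Z_hat t lam h w N = WC / 2 ^ N" unfolding WC_def C_def by (rule Z_hat_eq)
  have Z_pinned: "Z_pinned lam h w N = W0 / 2 ^ N" unfolding W0_def by (rule Z_pinned_eq)
  have "zigzag N \<in> pinned_paths C N"
    using zeta_le[OF t(1,2)] t(3) N unfolding C_def by (intro zigzag_in_pinned_paths) auto
  hence "weight lam h w (zigzag N) \<le> WC"
    unfolding WC_def by (intro member_le_sum pinned_paths_finite) (auto simp: less_imp_le weight_pos)
  thus "1 / 2 ^ N \<le> Z_hat t lam h w N" unfolding Z_hat weight_zigzag by (simp add: divide_right_mono)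
  have "WC \<le> W0" unfolding WC_def W0_def
    by (intro sum_mono2 pinned_paths_finite) (auto simp: pinned_paths_def less_imp_le weight_pos)
  thus "Z_hat t lam h w N \<le> Z_pinned lam h w N" unfolding Z_hat Z_pinned by (simp add: divide_right_mono)
  have "W0 \<le> insertion_cost t N * WC"
    unfolding W0_def WC_def C_def insertion_cost_def by (rule sum_weight_pinned_paths_le_cost[OF t order_refl])
  thus "Z_pinned lam h w N \<le> insertion_cost t N * Z_hat t lam h w N"
    unfolding Z_hat Z_pinned by (simp add: divide_right_mono)
  have "WC \<le> real (card (pinned_paths C N)) * exp (2 * lam * (\<Sum>n = 1..N. \<bar>w n + h\<bar>))"
    unfolding WC_def
  proof (rule sum_bounded_above)
    fix x assume "x \<in> pinned_paths C N"
    hence "length x = N" unfolding pinned_paths_def by (simp add: length_srw_paths)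
    thus "weight lam h w x \<le> exp (2 * lam * (\<Sum>n = 1..N. \<bar>w n + h\<bar>))"
      using weight_le_exp_sum_abs[OF lam, of h w x] by simp
  qed
  also have "\<dots> \<le> 2 ^ N * exp (2 * lam * (\<Sum>n = 1..N. \<bar>w n + h\<bar>))"
  proof -
    have "card (pinned_paths C N) \<le> card (srw_paths N)"
      by (intro card_mono srw_paths_finite) (auto simp: pinned_paths_def)
    thus ?thesis unfolding card_srw_paths by (intro mult_right_mono) (simp_all flip: of_nat_le_iff)
  qed
  finally show "Z_hat t lam h w N \<le> exp (2 * lam * (\<Sum>n = 1..N. \<bar>w n + h\<bar>))"
    unfolding Z_hat by (simp add: divide_le_eq mult.commute)
qed

lemma ln_one_plus_two_square_le:
  fixes d g :: real
  assumes "0 < d" "d \<le> 2" "0 \<le> g"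
  shows "ln (1 + 2 * g ^ 2) \<le> ln (8 / d ^ 2) + d * g"
proof -
  have "0 \<le> d * g" using assms by simp
  hence "1 + (d * g) ^ 2 / 4 \<le> exp (d * g)"
    using exp_lower_Taylor_quadratic[of "d * g"] zero_le_power2[of "d * g"] by linarith
  hence "(8 / d ^ 2) * (1 + (d * g) ^ 2 / 4) \<le> (8 / d ^ 2) * exp (d * g)"
    using assms by (intro mult_left_mono) (auto simp: power2_eq_square)
  moreover have "1 + 2 * g ^ 2 \<le> (8 / d ^ 2) * (1 + (d * g) ^ 2 / 4)"
  proof -
    have "d ^ 2 \<le> 8" using assms power_mono[of d 2 2] by simp
    thus ?thesis using assms by (simp add: field_simps power2_eq_square)
  qed
  ultimately have "ln (1 + 2 * g ^ 2) \<le> ln ((8 / d ^ 2) * exp (d * g))"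
    by (intro ln_mono) (auto simp: add_pos_nonneg)
  also have "\<dots> = ln (8 / d ^ 2) + d * g"
    using assms by (subst ln_mult) auto
  finally show ?thesis .
qed

lemma ln_insertion_cost_le:
  assumes t: "strict_mono t" "t 0 = 0" and d: "0 < d" "d \<le> 2"
  shows "ln (insertion_cost t N) \<le> real (zeta t N) * ln (8 / d ^ 2) + d * real N"
proof -
  have "ln (insertion_cost t N) = (\<Sum>i = 1..zeta t N. ln (1 + 2 * real (t i - t (i - 1)) ^ 2))"
  proof -
    have "0 < 1 + 2 * y ^ 2" for y :: real by (simp add: add_pos_nonneg)
    thus ?thesis unfolding insertion_cost_def by (intro ln_prod) (simp_all add: less_imp_neq[THEN not_sym])
  qed
  also have "\<dots> \<le> (\<Sum>i = 1..zeta t N. ln (8 / d ^ 2) + d * real (t i - t (i - 1)))"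
    by (intro sum_mono ln_one_plus_two_square_le d) simp
  also have "\<dots> = real (zeta t N) * ln (8 / d ^ 2) + d * (\<Sum>i = 1..zeta t N. real (t i - t (i - 1)))"
    by (simp add: sum.distrib sum_distrib_left)
  also have "(\<Sum>i = 1..k. real (t i - t (i - 1))) = real (t k)" for k
  proof (induction k)
    case (Suc k)
    have "t k \<le> t (Suc k)" using strict_mono_mono[OF t(1)] by (simp add: monoD)
    thus ?case using Suc by (simp add: of_nat_diff)
  qed (simp add: t(2))
  also have "d * real (t (zeta t N)) \<le> d * real N"
    using zeta_le[OF t order_refl] d by (intro mult_left_mono) auto
  finally show ?thesis by simp
qed

lemma ln_insertion_cost_over_N_tendsto_0:
  assumes t: "strict_mono t" "t 0 = 0" and zeta: "(\<lambda>N. real (zeta t N) / real N) \<longlonglongrightarrow> 0"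
  shows "(\<lambda>N. ln (insertion_cost t N) / real N) \<longlonglongrightarrow> 0"
proof (rule LIMSEQ_I)
  fix r :: real assume r: "0 < r"
  define d where "d = min 2 (r / 2)"
  have d: "0 < d" "d \<le> 2" "d \<le> r / 2" using r unfolding d_def by auto
  define c where "c = ln (8 / d ^ 2)"
  have c: "0 \<le> c"
  proof -
    have "d ^ 2 \<le> 4" using d power_mono[of d 2 2] by simp
    thus ?thesis using d unfolding c_def by (simp add: field_simps)
  qed
  obtain n0 where n0: "\<forall>n\<ge>n0. real (zeta t n) / real n < r / (2 * (c + 1))"
    using LIMSEQ_D[OF zeta, of "r / (2 * (c + 1))"] r c by auto
  have "\<bar>ln (insertion_cost t n) / real n\<bar> < r" if n: "max n0 1 \<le> n" for n
  proof -
    have n_pos: "0 < real n" using n by simp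
    have "0 \<le> ln (insertion_cost t n)"
      unfolding insertion_cost_def by (intro ln_ge_zero prod_ge_1) simp
    hence "0 \<le> ln (insertion_cost t n) / real n" using n_pos by simp
    moreover have "ln (insertion_cost t n) / real n \<le> (real (zeta t n) / real n) * c + d"
      using ln_insertion_cost_le[OF t d(1,2), of n] n_pos unfolding c_def by (simp add: field_simps)
    moreover have "(real (zeta t n) / real n) * c \<le> (r / (2 * (c + 1))) * c"
      using n0 n c by (intro mult_right_mono) auto
    moreover have "(r / (2 * (c + 1))) * c < r / 2" using r c by (simp add: field_simps)
    ultimately show ?thesis using d(3) by linarith
  qed
  thus "\<exists>n0. \<forall>n\<ge>n0. norm (ln (insertion_cost t n) / real n - 0) < r"
    by (metis real_norm_def diff_zero)
qed

section \<open>Free energies\<close>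

lemma ln_Z_hat_tendsto:
  assumes t: "strict_mono t" "t 0 = 0" "\<And>i. even (t i)"
    and zeta: "(\<lambda>N. real (zeta t N) / real N) \<longlonglongrightarrow> 0" and lam: "0 \<le> lam"
    and pinned: "(\<lambda>k. ln (Z_pinned lam h w (2 * k)) / real (2 * k)) \<longlonglongrightarrow> F"
  shows "(\<lambda>k. ln (Z_hat t lam h w (2 * k)) / real (2 * k)) \<longlonglongrightarrow> F"
proof (rule tendsto_sandwich[OF _ _ _ pinned])
  have "(\<lambda>k. ln (insertion_cost t (2 * k)) / real (2 * k)) \<longlonglongrightarrow> 0"
    using LIMSEQ_subseq_LIMSEQ[OF ln_insertion_cost_over_N_tendsto_0[OF t(1,2) zeta], of "\<lambda>k. 2 * k"]
    by (simp add: strict_mono_def comp_def)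
  thus "(\<lambda>k. ln (Z_pinned lam h w (2 * k)) / real (2 * k) - ln (insertion_cost t (2 * k)) / real (2 * k))
      \<longlonglongrightarrow> F"
    using tendsto_diff[OF pinned] by fastforce
  have bounds: "0 < Z_hat t lam h w (2 * k)" "Z_hat t lam h w (2 * k) \<le> Z_pinned lam h w (2 * k)"
    "Z_pinned lam h w (2 * k) \<le> insertion_cost t (2 * k) * Z_hat t lam h w (2 * k)" for k
    using Z_hat_bounds[OF t, of "2 * k" lam h w] lam by (auto intro: less_le_trans[of 0 "1 / 2 ^ (2 * k)"])
  have cost_pos: "0 < insertion_cost t N" for N
    unfolding insertion_cost_def by (intro prod_pos) (simp add: add_pos_nonneg)
  show "\<forall>\<^sub>F k in sequentially. ln (Z_hat t lam h w (2 * k)) / real (2 * k) \<le> ln (Z_pinned lam h w (2 * k)) / real (2 * k)"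
  proof (intro always_eventually allI divide_right_mono)
    show "ln (Z_hat t lam h w (2 * k)) \<le> ln (Z_pinned lam h w (2 * k))" for k
      by (intro ln_mono bounds(1,2))
  qed simp
  show "\<forall>\<^sub>F k in sequentially. ln (Z_pinned lam h w (2 * k)) / real (2 * k) - ln (insertion_cost t (2 * k)) / real (2 * k)
      \<le> ln (Z_hat t lam h w (2 * k)) / real (2 * k)"
  proof (intro always_eventually allI)
    fix k
    have "ln (Z_pinned lam h w (2 * k)) \<le> ln (insertion_cost t (2 * k) * Z_hat t lam h w (2 * k))"
      using bounds[of k] by (intro ln_mono) auto
    also have "\<dots> = ln (insertion_cost t (2 * k)) + ln (Z_hat t lam h w (2 * k))"
      by (rule ln_mult_pos[OF cost_pos bounds(1)])
    finally show "ln (Z_pinned lam h w (2 * k)) / real (2 * k) - ln (insertion_cost t (2 * k)) / real (2 * k)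
      \<le> ln (Z_hat t lam h w (2 * k)) / real (2 * k)"
      by (simp add: divide_right_mono flip: diff_divide_distrib)
  qed
qed

lemma abs_ln_Z_hat_div_le:
  assumes t: "strict_mono t" "t 0 = 0" "\<And>i. even (t i)" and N: "even N" and "0 \<le> lam" "0 \<le> h"
  shows "\<bar>ln (Z_hat t lam h w N) / real N\<bar> \<le> ln 2 + 2 * lam * h + 2 * lam * ((\<Sum>n = 1..N. \<bar>w n\<bar>) / real N)"
proof (cases "N = 0")
  case False
  have "- (real N * ln 2) \<le> ln (Z_hat t lam h w N)"
  proof -
    have "ln (1 / 2 ^ N) \<le> ln (Z_hat t lam h w N)"
      using Z_hat_bounds(1)[OF t N assms(5)] by (intro ln_mono) auto
    thus ?thesis by (simp add: ln_div ln_realpow)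
  qed
  moreover have "ln (Z_hat t lam h w N) \<le> 2 * lam * (\<Sum>n = 1..N. \<bar>w n + h\<bar>)"
  proof -
    have "ln (Z_hat t lam h w N) \<le> ln (exp (2 * lam * (\<Sum>n = 1..N. \<bar>w n + h\<bar>)))"
      using Z_hat_bounds(1,4)[OF t N assms(5), of h w]
      by (intro ln_mono) (auto intro: less_le_trans[of 0 "1 / 2 ^ N"])
    thus ?thesis by simp
  qed
  moreover have "2 * lam * (\<Sum>n = 1..N. \<bar>w n + h\<bar>) \<le> 2 * lam * (\<Sum>n = 1..N. \<bar>w n\<bar>) + 2 * lam * h * real N"
  proof -
    have "(\<Sum>n = 1..N. \<bar>w n + h\<bar>) \<le> (\<Sum>n = 1..N. \<bar>w n\<bar> + h)"
      using assms(6) by (intro sum_mono) (simp add: abs_triangle_ineq[THEN order_trans])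
    hence "2 * lam * (\<Sum>n = 1..N. \<bar>w n + h\<bar>) \<le> 2 * lam * (\<Sum>n = 1..N. \<bar>w n\<bar> + h)"
      using assms(5) by (intro mult_left_mono) simp_all
    thus ?thesis by (simp add: sum.distrib algebra_simps)
  qed
  moreover have "0 \<le> 2 * lam * (\<Sum>n = 1..N. \<bar>w n\<bar>)" "0 \<le> 2 * lam * h * real N" "0 \<le> real N * ln 2"
    using assms(5,6) by (auto intro: sum_nonneg)
  ultimately have "\<bar>ln (Z_hat t lam h w N)\<bar>
      \<le> real N * ln 2 + 2 * lam * h * real N + 2 * lam * (\<Sum>n = 1..N. \<bar>w n\<bar>)"
    by linarith
  hence "\<bar>ln (Z_hat t lam h w N)\<bar> / real N
      \<le> (real N * ln 2 + 2 * lam * h * real N + 2 * lam * (\<Sum>n = 1..N. \<bar>w n\<bar>)) / real N"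
    by (rule divide_right_mono) simp
  thus ?thesis using False by (simp add: abs_div add_divide_distrib)
qed (use assms in \<open>auto intro!: add_nonneg_nonneg mult_nonneg_nonneg sum_nonneg\<close>)

lemma mean_abs_square_le: "((\<Sum>n = 1..N. \<bar>w n\<bar>) / real N) ^ 2 \<le> (\<Sum>n = 1..N. (w n) ^ 2) / real N"
proof (cases "N = 0")
  case False
  have "(\<Sum>n = 1..N. \<bar>w n\<bar>) ^ 2 \<le> (\<Sum>n = 1..N. (w n) ^ 2) * real N"
    using sum_squared_le_sum_of_squares[of "\<lambda>n. \<bar>w n\<bar>" "{1..N}"] by simp
  thus ?thesis using False by (simp add: power_divide field_simps power2_eq_square)
qed simp

lemma square_ln_Z_hat_div_le:
  assumes t: "strict_mono t" "t 0 = 0" "\<And>i. even (t i)" and N: "even N" and "0 \<le> lam" "0 \<le> h"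
  shows "(ln (Z_hat t lam h w N) / real N - F) ^ 2
    \<le> 2 * (ln 2 + 2 * lam * h + \<bar>F\<bar>) ^ 2 + 8 * lam ^ 2 * ((\<Sum>n = 1..N. (w n) ^ 2) / real N)"
proof -
  define c where "c = ln 2 + 2 * lam * h + \<bar>F\<bar>"
  define a where "a = (\<Sum>n = 1..N. \<bar>w n\<bar>) / real N"
  have "\<bar>ln (Z_hat t lam h w N) / real N - F\<bar> \<le> c + 2 * lam * a"
    using abs_ln_Z_hat_div_le[OF assms, of w] unfolding c_def a_def by linarith
  hence "\<bar>ln (Z_hat t lam h w N) / real N - F\<bar> ^ 2 \<le> (c + 2 * lam * a) ^ 2"
    by (rule power_mono) simp
  hence "(ln (Z_hat t lam h w N) / real N - F) ^ 2 \<le> (c + 2 * lam * a) ^ 2" by simp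
  also have "\<dots> \<le> 2 * c ^ 2 + 8 * lam ^ 2 * a ^ 2"
    using zero_le_power2[of "c - 2 * lam * a"] by (simp add: power2_eq_square algebra_simps)
  also have "\<dots> \<le> 2 * c ^ 2 + 8 * lam ^ 2 * ((\<Sum>n = 1..N. (w n) ^ 2) / real N)"
    unfolding a_def using mean_abs_square_le by (intro add_left_mono mult_left_mono) auto
  finally show ?thesis unfolding c_def .
qed

lemma square_le_exp_add_exp: "(y::real) ^ 2 \<le> 2 * (exp y + exp (- y))"
proof -
  have key: "z ^ 2 \<le> 2 * exp z" if "0 \<le> z" for z :: real
    using exp_lower_Taylor_quadratic[OF that] that by simp
  show ?thesis
  proof (cases "0 \<le> y")
    case True
    thus ?thesis unfolding distrib_left using key[OF True] exp_gt_zero[of "- y"] by linarith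
  next
    case False
    hence "y ^ 2 \<le> 2 * exp (- y)" using key[of "- y"] by simp
    thus ?thesis unfolding distrib_left using exp_gt_zero[of y] by linarith
  qed
qed

lemma abs_le_one_add_square: "\<bar>z::real\<bar> \<le> 1 + z ^ 2"
proof -
  have "(\<bar>z\<bar> - 1 / 2) ^ 2 = z ^ 2 - \<bar>z\<bar> + 1 / 4"
    by (simp add: power2_eq_square algebra_simps)
  thus ?thesis using zero_le_power2[of "\<bar>z\<bar> - 1 / 2"] by linarith
qed

lemma abs_le_min_add_square_div:
  fixes z v T :: real
  assumes "0 < T" "z ^ 2 \<le> v"
  shows "\<bar>z\<bar> \<le> min \<bar>z\<bar> T + v / T"
proof (cases "\<bar>z\<bar> \<le> T")
  case True
  have "0 \<le> v" using assms(2) zero_le_power2[of z] by linarith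
  thus ?thesis using True assms(1) by simp
next
  case False
  hence "\<bar>z\<bar> * T \<le> \<bar>z\<bar> * \<bar>z\<bar>" by (intro mult_left_mono) auto
  hence "\<bar>z\<bar> * T \<le> v" using assms(2) by (simp add: power2_eq_square)
  hence "\<bar>z\<bar> \<le> v / T" using assms(1) by (simp add: field_simps)
  thus ?thesis using False assms(1) by simp
qed

lemma (in finite_measure) integral_min_abs_diff_tendsto_0:
  fixes f :: "nat \<Rightarrow> 'a \<Rightarrow> real"
  assumes meas: "\<And>k. f k \<in> borel_measurable M" and lim: "AE x in M. (\<lambda>k. f k x) \<longlonglongrightarrow> c"
    and "0 < T"
  shows "(\<lambda>k. \<integral>x. min \<bar>f k x - c\<bar> T \<partial>M) \<longlonglongrightarrow> 0"
proof -
  have "(\<lambda>k. \<integral>x. min \<bar>f k x - c\<bar> T \<partial>M) \<longlonglongrightarrow> (\<integral>x. 0 \<partial>M)"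
  proof (rule integral_dominated_convergence[where w = "\<lambda>_. T"])
    show "(\<lambda>x. min \<bar>f k x - c\<bar> T) \<in> borel_measurable M" for k
      using meas[of k] by measurable
    show "AE x in M. (\<lambda>k. min \<bar>f k x - c\<bar> T) \<longlonglongrightarrow> 0"
      using lim
    proof eventually_elim
      case (elim x)
      have "(\<lambda>k. min \<bar>f k x - c\<bar> T) \<longlonglongrightarrow> min \<bar>c - c\<bar> T"
        by (intro tendsto_min tendsto_rabs tendsto_diff elim tendsto_const)
      thus ?case using \<open>0 < T\<close> by simp
    qed
  qed (use \<open>0 < T\<close> in simp_all)
  thus ?thesis by simp
qed

text \<open>Truncating at a height \<open>T\<close>, dominated convergence controls the part below \<open>T\<close> and the second
  moment bound the part above it.\<close>

lemma (in prob_space) L1_tendsto_if_AE_tendsto_and_square_bounded: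
  fixes f V :: "nat \<Rightarrow> 'a \<Rightarrow> real"
  assumes meas: "\<And>k. f k \<in> borel_measurable M"
    and lim: "AE x in M. (\<lambda>k. f k x) \<longlonglongrightarrow> c"
    and square: "\<And>k x. (f k x - c) ^ 2 \<le> V k x"
    and V: "\<And>k. integrable M (V k)" "\<And>k. (\<integral>x. V k x \<partial>M) \<le> K"
  shows "integrable M (f k)"
    and "(\<lambda>k. \<integral>x. \<bar>f k x - c\<bar> \<partial>M) \<longlonglongrightarrow> 0"
proof -
  have V_nonneg: "0 \<le> V k x" for k x
    using square[of k x] zero_le_power2[of "f k x - c"] by linarith
  show "integrable M (f k)" for k
  proof (rule Bochner_Integration.integrable_bound)
    show "integrable M (\<lambda>x. \<bar>c\<bar> + (1 + V k x))"
      using V(1) by (intro Bochner_Integration.integrable_add integrable_const)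
    have "\<bar>f k x\<bar> \<le> \<bar>c\<bar> + (1 + V k x)" for x
      using abs_triangle_ineq[of "f k x - c" c] abs_le_one_add_square[of "f k x - c"] square[of k x] by simp
    thus "AE x in M. norm (f k x) \<le> norm (\<bar>c\<bar> + (1 + V k x))"
      using V_nonneg[of k] by (intro AE_I2) (simp add: add_nonneg_nonneg)
  qed (rule meas)
  have "0 \<le> (\<integral>x. V 0 x \<partial>M)" using V_nonneg by (intro integral_nonneg_AE AE_I2)
  hence K: "0 \<le> K" using V(2)[of 0] by linarith
  show "(\<lambda>k. \<integral>x. \<bar>f k x - c\<bar> \<partial>M) \<longlonglongrightarrow> 0"
  proof (rule LIMSEQ_I)
    fix r :: real assume r: "0 < r"
    define T where "T = 2 * K / r + 1"
    have T: "0 < T" "K / T < r / 2" unfolding T_def using r K by (auto simp: field_simps)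
    have int_min: "integrable M (\<lambda>x. min \<bar>f k x - c\<bar> T)" for k
      using meas[of k] T(1) by (intro Bochner_Integration.integrable_bound[OF integrable_const[of T]]) auto
    obtain k0 where k0: "\<forall>k\<ge>k0. norm ((\<integral>x. min \<bar>f k x - c\<bar> T \<partial>M) - 0) < r / 2"
      using LIMSEQ_D[OF integral_min_abs_diff_tendsto_0[OF meas lim T(1)], of "r / 2"] r by auto
    have "\<bar>\<integral>x. \<bar>f k x - c\<bar> \<partial>M\<bar> < r" if "k0 \<le> k" for k
    proof -
      have "(\<integral>x. \<bar>f k x - c\<bar> \<partial>M) \<le> (\<integral>x. min \<bar>f k x - c\<bar> T + V k x / T \<partial>M)"
        using abs_le_min_add_square_div[OF T(1) square] int_min V(1) \<open>\<And>k. integrable M (f k)\<close>[of k]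
        by (intro integral_mono Bochner_Integration.integrable_add integrable_divide integrable_abs
            Bochner_Integration.integrable_diff integrable_const)
      also have "\<dots> = (\<integral>x. min \<bar>f k x - c\<bar> T \<partial>M) + (\<integral>x. V k x \<partial>M) / T"
        using int_min V(1) by simp
      also have "\<dots> < r"
      proof -
        have "(\<integral>x. V k x \<partial>M) / T \<le> K / T" using V(2) T(1) by (intro divide_right_mono) auto
        moreover have "(\<integral>x. min \<bar>f k x - c\<bar> T \<partial>M) < r / 2" using k0 that by auto
        ultimately show ?thesis using T(2) by linarith
      qed
      finally show ?thesis by (simp add: integral_nonneg_AE)
    qed
    thus "\<exists>k0. \<forall>k\<ge>k0. norm ((\<integral>x. \<bar>f k x - c\<bar> \<partial>M) - 0) < r" by auto
  qed
qed

lemma (in prob_space) integrable_square_if_exp_moments: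
  assumes "X \<in> borel_measurable M" "\<And>\<alpha>::real. integrable M (\<lambda>x. exp (\<alpha> * X x))"
  shows "integrable M (\<lambda>x. (X x) ^ 2)"
proof (rule Bochner_Integration.integrable_bound)
  show "integrable M (\<lambda>x. 2 * (exp (1 * X x) + exp (- 1 * X x)))"
    using assms(2) by (intro integrable_mult_right Bochner_Integration.integrable_add)
  show "AE x in M. norm ((X x) ^ 2) \<le> norm (2 * (exp (1 * X x) + exp (- 1 * X x)))"
    using square_le_exp_add_exp by (intro AE_I2) (simp add: add_pos_pos)
qed (use assms(1) in measurable)

lemma (in prob_space) affine_mean_square_sum:
  fixes a b :: real
  assumes "\<And>n. 1 \<le> n \<Longrightarrow> integrable M (\<lambda>x. (X x n) ^ 2)" "\<And>n. 1 \<le> n \<Longrightarrow> (\<integral>x. (X x n) ^ 2 \<partial>M) = 1"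
    and "0 \<le> b"
  shows "integrable M (\<lambda>x. a + b * ((\<Sum>n = 1..N. (X x n) ^ 2) / real N))"
    and "(\<integral>x. a + b * ((\<Sum>n = 1..N. (X x n) ^ 2) / real N) \<partial>M) \<le> a + b"
proof -
  have int: "integrable M (\<lambda>x. (\<Sum>n = 1..N. (X x n) ^ 2) / real N)"
    using assms(1) by (intro integrable_divide Bochner_Integration.integrable_sum) simp
  thus "integrable M (\<lambda>x. a + b * ((\<Sum>n = 1..N. (X x n) ^ 2) / real N))"
    by (intro Bochner_Integration.integrable_add integrable_mult_right integrable_const)
  have "(\<integral>x. (\<Sum>n = 1..N. (X x n) ^ 2) \<partial>M) = real N"
    using assms(1,2) by (simp add: Bochner_Integration.integral_sum)
  hence "b * (\<integral>x. (\<Sum>n = 1..N. (X x n) ^ 2) / real N \<partial>M) \<le> b"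
    using assms(3) by (intro mult_left_le) simp_all
  moreover have "(\<integral>x. a + b * ((\<Sum>n = 1..N. (X x n) ^ 2) / real N) \<partial>M)
      = (\<integral>x. a \<partial>M) + (\<integral>x. b * ((\<Sum>n = 1..N. (X x n) ^ 2) / real N) \<partial>M)"
    using int by (intro Bochner_Integration.integral_add integrable_const integrable_mult_right)
  ultimately show "(\<integral>x. a + b * ((\<Sum>n = 1..N. (X x n) ^ 2) / real N) \<partial>M) \<le> a + b"
    by (simp only: integral_mult_right_zero) (simp add: prob_space)
qed

lemma (in prob_space) square_moment_transfer:
  fixes X Y :: "'a \<Rightarrow> real"
  assumes "X \<in> borel_measurable M" "Y \<in> borel_measurable M" "distr M borel X = distr M borel Y"
    and "integrable M (\<lambda>x. (Y x) ^ 2)"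
  shows "integrable M (\<lambda>x. (X x) ^ 2)" "(\<integral>x. (X x) ^ 2 \<partial>M) = (\<integral>x. (Y x) ^ 2 \<partial>M)"
  using integrable_distr_eq[OF assms(1), of "\<lambda>y::real. y ^ 2"] integrable_distr_eq[OF assms(2), of "\<lambda>y::real. y ^ 2"]
    integral_distr[OF assms(1), of "\<lambda>y::real. y ^ 2"] integral_distr[OF assms(2), of "\<lambda>y::real. y ^ 2"] assms(3,4)
  by simp_all

lemma Z_hat_measurable:
  assumes "\<And>n. 1 \<le> n \<Longrightarrow> (\<lambda>x. \<omega> x n) \<in> borel_measurable M"
  shows "(\<lambda>x. Z_hat t lam h (\<omega> x) N) \<in> borel_measurable M"
  unfolding Z_hat_def copolymer_weight_def
  by (intro borel_measurable_divide borel_measurable_sum borel_measurable_const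
      measurable_compose[OF _ borel_measurable_exp] borel_measurable_times borel_measurable_add assms) auto

theorem lemmaB1:
  fixes M :: "'a measure" and \<omega> :: "'a \<Rightarrow> nat \<Rightarrow> real"
    and t :: "nat \<Rightarrow> nat" and lam h F :: real
  assumes "prob_space M"
    and indep: "prob_space.indep_vars M (\<lambda>_. borel) (\<lambda>n x. \<omega> x n) {1..}"
    and ident: "\<And>n. n \<ge> 1 \<Longrightarrow> distr M borel (\<lambda>x. \<omega> x n) = distr M borel (\<lambda>x. \<omega> x 1)"
    and expmom: "\<And>\<alpha>::real. integrable M (\<lambda>x. exp (\<alpha> * \<omega> x 1))"
    and mean: "prob_space.expectation M (\<lambda>x. \<omega> x 1) = 0"
    and var: "prob_space.expectation M (\<lambda>x. (\<omega> x 1)^2) = 1"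
    and t0: "t 0 = 0" and tmono: "strict_mono t" and teven: "\<And>i. even (t i)"
    and zeta_lim: "(\<lambda>N. real (zeta t N) / real N) \<longlonglongrightarrow> 0"
    and lam: "lam \<ge> 0" and h: "h \<ge> 0"
    and free_energy: "AE x in M.
          (\<lambda>k. ln (Z_pinned lam h (\<omega> x) (2 * k)) / real (2 * k)) \<longlonglongrightarrow> F"
  shows "(AE x in M.
          (\<lambda>k. ln (Z_hat t lam h (\<omega> x) (2 * k)) / real (2 * k)) \<longlonglongrightarrow> F)
       \<and> (\<forall>k. integrable M (\<lambda>x. ln (Z_hat t lam h (\<omega> x) (2 * k)) / real (2 * k)))
       \<and> ((\<lambda>k. \<integral>x. \<bar>ln (Z_hat t lam h (\<omega> x) (2 * k)) / real (2 * k) - F\<bar> \<partial>M) \<longlonglongrightarrow> 0)"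
proof -
  interpret prob_space M by fact
  have meas: "(\<lambda>x. \<omega> x n) \<in> borel_measurable M" if "1 \<le> n" for n
    using indep that unfolding indep_vars_def by auto
  have square_int_1: "integrable M (\<lambda>x. (\<omega> x 1) ^ 2)"
    using meas expmom by (intro integrable_square_if_exp_moments) auto
  have square_int: "integrable M (\<lambda>x. (\<omega> x n) ^ 2)"
    and square_mean: "(\<integral>x. (\<omega> x n) ^ 2 \<partial>M) = 1" if "1 \<le> n" for n
    using square_moment_transfer[OF meas[OF that] meas[OF order_refl] ident[OF that] square_int_1] var
    by simp_all
  define c where "c = ln 2 + 2 * lam * h + \<bar>F\<bar>"
  have "0 \<le> 8 * lam ^ 2" by simp
  note V = affine_mean_square_sum[where X = \<omega> and a = "2 * c ^ 2", OF square_int square_mean this]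
  define L where "L k x = ln (Z_hat t lam h (\<omega> x) (2 * k)) / real (2 * k)" for k x
  have AE_lim: "AE x in M. (\<lambda>k. L k x) \<longlonglongrightarrow> F"
    using free_energy unfolding L_def
    by eventually_elim (rule ln_Z_hat_tendsto[OF tmono t0 teven zeta_lim lam])
  have L_meas: "L k \<in> borel_measurable M" for k
    unfolding L_def by (intro borel_measurable_divide borel_measurable_ln Z_hat_measurable meas borel_measurable_const)
  have square: "(L k x - F) ^ 2 \<le> 2 * c ^ 2 + 8 * lam ^ 2 * ((\<Sum>n = 1..2 * k. (\<omega> x n) ^ 2) / real (2 * k))"
    for k x unfolding L_def c_def by (rule square_ln_Z_hat_div_le[OF tmono t0 teven _ lam h]) simp
  show ?thesis
    using AE_lim L1_tendsto_if_AE_tendsto_and_square_bounded[OF L_meas AE_lim square V]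
    unfolding L_def by blast
qed

end
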